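(* Let $K$ be a ramified quadratic extension of $\mathbb{Q}_2$, $d=2m$ with $m$ odd, $m\ge3$, and $f=a_1x_1^d+\dots+a_sx_s^d$ with all $a_i\in\mathcal{O}\setminus\{0\}$. Suppose $f$ has six distinct variables at a common level that can be split into three disjoint pairs, each pair consisting of two variables with the same $\pi$-coefficient. Then $f$ has a nontrivial zero in $K$. In particular, if $f$ has seven variables at the same level, then $f$ has a nontrivial zero in $K$.
   Context: $\mathcal{O}$ is the ring of integers of $K$ and $\pi$ the uniformizer: $\pi=\sqrt{2},\sqrt{-2},\sqrt{10},\sqrt{-10},1+\sqrt{-1},1+\sqrt{-5}$ for $K=\mathbb{Q}_2(\sqrt2),\mathbb{Q}_2(\sqrt{-2}),\mathbb{Q}_2(\sqrt{10}),\mathbb{Q}_2(\sqrt{-10}),\mathbb{Q}_2(\sqrt{-1}),\mathbb{Q}_2(\sqrt{-5})$ respectively. Each unit $u$ has a unique expansion $u=c_0+c_1\pi+c_2\pi^2+\cdots$ with $c_j\in\{0,1\}$, $c_0=1$. Writing $a_i=\pi^r u$ with $u$ a unit, the variable $x_i$ is at level $r\bmod d$ (levels are residues modulo $d$), and its $\pi$-coefficient is $c_1$ of $u$. A nontrivial zero is a point of $K^s$, not all coordinates zero, where $f$ vanishes. *)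

theory Defs
  imports Main
begin

typedef z2 = "{x :: nat \<Rightarrow> int. \<forall>n. 0 \<le> x n \<and> x n < 2^n \<and> x (Suc n) mod 2^n = x n}"
  by (rule exI[of _ "\<lambda>_. 0"]) simp

definition z2_of_int :: "int \<Rightarrow> z2" where
  "z2_of_int k = Abs_z2 (\<lambda>n. k mod 2^n)"

definition z2_add :: "z2 \<Rightarrow> z2 \<Rightarrow> z2" where
  "z2_add x y = Abs_z2 (\<lambda>n. (Rep_z2 x n + Rep_z2 y n) mod 2^n)"

definition z2_neg :: "z2 \<Rightarrow> z2" where
  "z2_neg x = Abs_z2 (\<lambda>n. (- Rep_z2 x n) mod 2^n)"

definition z2_mul :: "z2 \<Rightarrow> z2 \<Rightarrow> z2" where
  "z2_mul x y = Abs_z2 (\<lambda>n. (Rep_z2 x n * Rep_z2 y n) mod 2^n)"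

text \<open>An element (a,b) stands for a + b*sqrt D. For D in {2,-2,10,-10,-1,-5}
  the ring of integers of Q_2(sqrt D) is exactly Z_2[sqrt D].\<close>

type_synonym oelt = "z2 \<times> z2"

definition o_zero :: oelt where "o_zero = (z2_of_int 0, z2_of_int 0)"
definition o_one :: oelt where "o_one = (z2_of_int 1, z2_of_int 0)"

definition o_add :: "oelt \<Rightarrow> oelt \<Rightarrow> oelt" where
  "o_add x y = (z2_add (fst x) (fst y), z2_add (snd x) (snd y))"

definition o_sub :: "oelt \<Rightarrow> oelt \<Rightarrow> oelt" where
  "o_sub x y = (z2_add (fst x) (z2_neg (fst y)), z2_add (snd x) (z2_neg (snd y)))"

definition o_mul :: "int \<Rightarrow> oelt \<Rightarrow> oelt \<Rightarrow> oelt" where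
  "o_mul D x y =
     (z2_add (z2_mul (fst x) (fst y)) (z2_mul (z2_of_int D) (z2_mul (snd x) (snd y))),
      z2_add (z2_mul (fst x) (snd y)) (z2_mul (snd x) (fst y)))"

fun o_pow :: "int \<Rightarrow> oelt \<Rightarrow> nat \<Rightarrow> oelt" where
  "o_pow D x 0 = o_one"
| "o_pow D x (Suc n) = o_mul D (o_pow D x n) x"

definition o_pi :: "int \<Rightarrow> oelt" where
  "o_pi D = (if D \<in> {-1, -5} then (z2_of_int 1, z2_of_int 1) else (z2_of_int 0, z2_of_int 1))"

definition o_unit :: "int \<Rightarrow> oelt \<Rightarrow> bool" where
  "o_unit D u \<longleftrightarrow> (\<exists>v. o_mul D u v = o_one)"

definition o_dvd :: "int \<Rightarrow> oelt \<Rightarrow> oelt \<Rightarrow> bool" where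
  "o_dvd D x y \<longleftrightarrow> (\<exists>z. y = o_mul D x z)"

definition o_val :: "int \<Rightarrow> oelt \<Rightarrow> nat" where
  "o_val D a = (THE r. \<exists>u. o_unit D u \<and> a = o_mul D (o_pow D (o_pi D) r) u)"

definition o_upart :: "int \<Rightarrow> oelt \<Rightarrow> oelt" where
  "o_upart D a = (THE u. o_unit D u \<and> a = o_mul D (o_pow D (o_pi D) (o_val D a)) u)"

definition level :: "int \<Rightarrow> nat \<Rightarrow> oelt \<Rightarrow> nat" where
  "level D d a = o_val D a mod d"

fun pi_psum :: "int \<Rightarrow> (nat \<Rightarrow> nat) \<Rightarrow> nat \<Rightarrow> oelt" where
  "pi_psum D c 0 = o_zero"
| "pi_psum D c (Suc n) =
     o_add (pi_psum D c n) (if c n = 1 then o_pow D (o_pi D) n else o_zero)"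

text \<open>The coefficient c_1 of the unique expansion u = c_0 + c_1 pi + c_2 pi^2 + ...
  with c_j in {0,1}, c_0 = 1 (expansion = convergence of partial sums pi-adically).\<close>
definition pi_coeff :: "int \<Rightarrow> oelt \<Rightarrow> nat" where
  "pi_coeff D u = (THE c1. \<exists>c :: nat \<Rightarrow> nat. (\<forall>j. c j \<le> 1) \<and> c 0 = 1 \<and> c 1 = c1 \<and>
       (\<forall>n. o_dvd D (o_pow D (o_pi D) n) (o_sub u (pi_psum D c n))))"

definition var_pi_coeff :: "int \<Rightarrow> oelt \<Rightarrow> nat" where
  "var_pi_coeff D a = pi_coeff D (o_upart D a)"

fun diag_form :: "int \<Rightarrow> nat \<Rightarrow> (nat \<Rightarrow> oelt) \<Rightarrow> (nat \<Rightarrow> oelt) \<Rightarrow> nat \<Rightarrow> oelt" where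
  "diag_form D d a x 0 = o_zero"
| "diag_form D d a x (Suc i) = o_add (diag_form D d a x i) (o_mul D (a i) (o_pow D (x i) d))"

text \<open>Nontrivial zero; since f is a form and K = O[1/pi], a nontrivial zero in K^s
  exists iff one exists in O^s (clear denominators).\<close>
definition has_nontrivial_zero :: "int \<Rightarrow> nat \<Rightarrow> nat \<Rightarrow> (nat \<Rightarrow> oelt) \<Rightarrow> bool" where
  "has_nontrivial_zero D d s a \<longleftrightarrow>
     (\<exists>x :: nat \<Rightarrow> oelt. (\<exists>i<s. x i \<noteq> o_zero) \<and> diag_form D d a x s = o_zero)"

end

theory Submission
  imports Defs
begin

text \<open>Write the six coefficients as \<open>\<pi> ^ r\<^sub>k u\<^sub>k\<close> with units \<open>u\<^sub>k\<close> and all \<open>r\<^sub>k\<close> congruent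
  modulo \<open>d\<close>. Rescaling the variables by powers of \<open>\<pi>\<close> gives all terms a common valuation, so it
  suffices to find a zero of \<open>\<Sum> u\<^sub>k x\<^sub>k ^ d\<close> in which some \<open>x\<^sub>k\<close> is a unit. Units satisfy
  \<open>X ^ 8 \<equiv> 1 (mod 8)\<close>, so modulo 8 the square of a unit is a \<open>d\<close>-th power of a unit (of \<open>X\<close> or
  \<open>X ^ 3\<close>, depending on \<open>m mod 4\<close>). A finite computation modulo 8 in each of the six rings shows
  that for units \<open>u \<equiv> v (mod 2)\<close>, i.e. with equal \<open>\<pi>\<close>-coefficient, some \<open>j \<in> {0, 1}\<close> makes both
  \<open>\<pi>\<^sup>2 + j \<pi>\<^sup>3\<close> and its negative values of \<open>u X\<^sup>2 + v Y\<^sup>2\<close>. Two of the three pairs share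
  \<open>j\<close>, so four of the terms sum to \<open>0\<close> modulo 8; since the derivative of \<open>u Y ^ d\<close> is twice a
  unit, Hensel's lemma lifts this to an exact zero. Seven variables at one level contain three
  disjoint pairs with equal \<open>\<pi>\<close>-coefficient, because that coefficient is 0 or 1.\<close>

section \<open>The ring of 2-adic integers\<close>

definition res :: "nat \<Rightarrow> z2 \<Rightarrow> int" where
  "res n x = Rep_z2 x n"

lemma res_bounds: "0 \<le> res n x" "res n x < 2 ^ n"
  using Rep_z2[of x] by (auto simp: res_def)

lemma res_Suc_mod: "res (Suc n) x mod 2 ^ n = res n x"
  using Rep_z2[of x] by (auto simp: res_def)

lemma res_mod_self [simp]: "res n x mod 2 ^ n = res n x"
  using res_bounds[of n x] by simp

lemma res_0 [simp]: "res 0 x = 0"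
  using res_bounds[of 0 x] by simp

lemma res_mod: "n \<le> k \<Longrightarrow> res k x mod 2 ^ n = res n x"
proof (induction k rule: dec_induct)
  case (step k)
  have "res (Suc k) x mod 2 ^ n = res (Suc k) x mod 2 ^ k mod 2 ^ n"
    using step.hyps by (simp add: mod_mod_cancel le_imp_power_dvd)
  then show ?case using res_Suc_mod step.IH by simp
qed simp

lemma z2_eq_iff: "x = y \<longleftrightarrow> (\<forall>n. res n x = res n y)"
  by (auto simp: res_def Rep_z2_inject[symmetric])

definition coherent :: "(nat \<Rightarrow> int) \<Rightarrow> bool" where
  "coherent g \<longleftrightarrow> (\<forall>n. g (Suc n) mod 2 ^ n = g n mod 2 ^ n)"

lemma res_Abs_z2_coherent:
  assumes "coherent g"
  shows "res n (Abs_z2 (\<lambda>n. g n mod 2 ^ n)) = g n mod 2 ^ n"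
proof -
  have "(\<lambda>n. g n mod 2 ^ n) \<in> {x. \<forall>n. 0 \<le> x n \<and> x n < 2 ^ n \<and> x (Suc n) mod 2 ^ n = x n}"
    using assms by (auto simp: coherent_def mod_mod_cancel)
  then show ?thesis by (simp add: res_def Abs_z2_inverse)
qed

lemma coherent_res: "coherent (\<lambda>n. res n x)"
  by (simp add: coherent_def res_Suc_mod)

lemma coherent_add: "coherent f \<Longrightarrow> coherent g \<Longrightarrow> coherent (\<lambda>n. f n + g n)"
  unfolding coherent_def by (metis mod_add_eq)

lemma coherent_mult: "coherent f \<Longrightarrow> coherent g \<Longrightarrow> coherent (\<lambda>n. f n * g n)"
  unfolding coherent_def by (metis mod_mult_eq)

lemma coherent_uminus: "coherent f \<Longrightarrow> coherent (\<lambda>n. - f n)"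
  unfolding coherent_def by (metis mod_minus_eq)

lemma coherent_const: "coherent (\<lambda>n. k)"
  by (simp add: coherent_def mod_mod_cancel)

lemma res_z2_add: "res n (z2_add x y) = (res n x + res n y) mod 2 ^ n"
  unfolding z2_add_def using res_Abs_z2_coherent[OF coherent_add[OF coherent_res coherent_res]]
  by (simp add: res_def)

lemma res_z2_mul: "res n (z2_mul x y) = (res n x * res n y) mod 2 ^ n"
  unfolding z2_mul_def using res_Abs_z2_coherent[OF coherent_mult[OF coherent_res coherent_res]]
  by (simp add: res_def)

lemma res_z2_neg: "res n (z2_neg x) = (- res n x) mod 2 ^ n"
  unfolding z2_neg_def using res_Abs_z2_coherent[OF coherent_uminus[OF coherent_res]]
  by (simp add: res_def)

lemma res_z2_of_int: "res n (z2_of_int k) = k mod 2 ^ n"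
  unfolding z2_of_int_def using res_Abs_z2_coherent[OF coherent_const] .

instantiation z2 :: comm_ring_1
begin

definition "zero_z2 = z2_of_int 0"
definition "one_z2 = z2_of_int 1"
definition "plus_z2 = z2_add"
definition "times_z2 = z2_mul"
definition "uminus_z2 = z2_neg"
definition "minus_z2 x y = z2_add x (z2_neg y)"

instance
proof
  fix a b c :: z2
  show "a + b + c = a + (b + c)"
    by (simp add: z2_eq_iff plus_z2_def res_z2_add mod_add_left_eq mod_add_right_eq add.assoc)
  show "a + b = b + a"
    by (simp add: z2_eq_iff plus_z2_def res_z2_add add.commute)
  show "0 + a = a"
    by (simp add: z2_eq_iff plus_z2_def zero_z2_def res_z2_add res_z2_of_int)
  show "- a + a = 0"
    by (simp add: z2_eq_iff plus_z2_def zero_z2_def uminus_z2_def res_z2_add res_z2_neg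
        res_z2_of_int mod_add_left_eq)
  show "a - b = a + - b"
    by (simp add: minus_z2_def plus_z2_def uminus_z2_def)
  show "a * b * c = a * (b * c)"
    by (simp add: z2_eq_iff times_z2_def res_z2_mul mod_mult_left_eq mod_mult_right_eq mult.assoc)
  show "a * b = b * a"
    by (simp add: z2_eq_iff times_z2_def res_z2_mul mult.commute)
  have "(1 mod 2 ^ n * res n a) mod 2 ^ n = res n a" for n
  proof (cases n)
    case (Suc k)
    then have "(1::int) < 2 ^ n" using one_less_power[of "2::int" n] by simp
    then show ?thesis by simp
  qed simp
  then show "1 * a = a"
    by (simp add: z2_eq_iff times_z2_def one_z2_def res_z2_mul res_z2_of_int)
  have "((x + y) mod M * z) mod M = ((x * z) mod M + (y * z) mod M) mod M" for x y z M :: int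
    by (metis distrib_right mod_add_eq mod_mult_left_eq)
  then show "(a + b) * c = a * c + b * c"
    by (simp add: z2_eq_iff plus_z2_def times_z2_def res_z2_add res_z2_mul)
  have "res 1 (0::z2) \<noteq> res 1 1"
    by (simp add: zero_z2_def one_z2_def res_z2_of_int)
  then show "(0::z2) \<noteq> 1" by metis
qed

end

lemma res_zero [simp]: "res n 0 = 0"
  by (simp add: zero_z2_def res_z2_of_int)

lemma res_one: "res n 1 = 1 mod 2 ^ n"
  by (simp add: one_z2_def res_z2_of_int)

lemma res_add: "res n (x + y) = (res n x + res n y) mod 2 ^ n"
  by (simp add: plus_z2_def res_z2_add)

lemma res_mult: "res n (x * y) = (res n x * res n y) mod 2 ^ n"
  by (simp add: times_z2_def res_z2_mul)

lemma res_uminus: "res n (- x) = (- res n x) mod 2 ^ n"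
  by (simp add: uminus_z2_def res_z2_neg)

lemma res_diff: "res n (x - y) = (res n x - res n y) mod 2 ^ n"
  by (simp add: minus_z2_def res_z2_add res_z2_neg mod_add_right_eq)

lemma res_of_nat: "res n (of_nat k) = int k mod 2 ^ n"
  by (induction k) (simp_all add: res_add res_one mod_add_left_eq mod_add_right_eq add.commute)

lemma res_of_int: "res n (of_int k) = k mod 2 ^ n"
proof (cases "k \<ge> 0")
  case False
  then have e: "of_int k = - (of_nat (nat (- k)) :: z2)" by simp
  show ?thesis unfolding e res_uminus res_of_nat using False by (simp add: mod_minus_eq)
qed (use res_of_nat[of n "nat k"] in simp)

lemma z2_of_int_eq_of_int: "z2_of_int k = of_int k"
  by (simp add: z2_eq_iff res_of_int res_z2_of_int)

lemma z2_ops_eq_ring_ops: "z2_add x y = x + y" "z2_mul x y = x * y" "z2_neg x = - x"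
  by (simp_all add: plus_z2_def times_z2_def uminus_z2_def)

lemma res_two_power: "res n ((2::z2) ^ k) = 2 ^ k mod 2 ^ n"
  using res_of_nat[of n "2 ^ k"] by simp

lemma res_Suc_0_cases: "res (Suc 0) x = 0 \<or> res (Suc 0) x = 1"
  using res_bounds[of "Suc 0" x] by auto

lemma two_power_dvd_iff_res_eq_0: "(2::z2) ^ k dvd z \<longleftrightarrow> res k z = 0"
proof
  assume "(2::z2) ^ k dvd z"
  then obtain w where "z = 2 ^ k * w" by (auto simp: dvd_def)
  then show "res k z = 0" by (simp add: res_mult res_two_power)
next
  assume h: "res k z = 0"
  define q where "q n = res (n + k) z div 2 ^ k" for n
  have qz: "res (n + k) z = 2 ^ k * q n" for n
    using res_mod[of k "n + k" z] h by (simp add: q_def dvd_eq_mod_eq_0)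
  have "coherent q"
    unfolding coherent_def
  proof
    fix n
    have "res (Suc n + k) z mod 2 ^ (n + k) = res (n + k) z" by (rule res_mod) simp
    then have "2 ^ k * (q (Suc n) mod 2 ^ n) = 2 ^ k * q n"
      using qz[of n] qz[of "Suc n"] by (metis power_add mult.commute mult_mod_right)
    then have "q (Suc n) mod 2 ^ n = q n" by simp
    then show "q (Suc n) mod 2 ^ n = q n mod 2 ^ n" by (metis mod_mod_trivial)
  qed
  define w where "w = Abs_z2 (\<lambda>n. q n mod 2 ^ n)"
  have "res n z = res n (2 ^ k * w)" for n
  proof -
    have "res n z = res (n + k) z mod 2 ^ n" by (rule res_mod[symmetric]) simp
    also have "\<dots> = (2 ^ k * q n) mod 2 ^ n" by (simp add: qz)
    also have "\<dots> = res n (2 ^ k * w)"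
      by (simp add: w_def res_Abs_z2_coherent[OF \<open>coherent q\<close>] res_mult res_two_power
          mod_mult_left_eq mod_mult_right_eq)
    finally show ?thesis .
  qed
  then have "z = 2 ^ k * w" by (simp add: z2_eq_iff)
  then show "(2::z2) ^ k dvd z" by simp
qed

lemma z2_eq_0_if_two_power_dvd: "(\<And>n. (2::z2) ^ n dvd z) \<Longrightarrow> z = 0"
  by (simp add: two_power_dvd_iff_res_eq_0 z2_eq_iff)

lemma res_eq_if_two_power_dvd_diff:
  assumes "(2::z2) ^ n dvd x - y"
  shows "res n x = res n y"
proof -
  have "(res n x - res n y) mod 2 ^ n = 0"
    using assms by (simp add: two_power_dvd_iff_res_eq_0 res_diff)
  then have "res n x mod 2 ^ n = res n y mod 2 ^ n"
    by (simp only: mod_eq_dvd_iff dvd_eq_mod_eq_0)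
  then show ?thesis by simp
qed

lemma z2_cauchy_limit:
  assumes "\<And>n. (2::z2) ^ n dvd f (Suc n) - f n"
  shows "\<exists>y. \<forall>n. (2::z2) ^ n dvd y - f n"
proof -
  have coh: "coherent (\<lambda>n. res n (f n))"
    using res_eq_if_two_power_dvd_diff[OF assms] by (simp add: coherent_def res_Suc_mod)
  define y where "y = Abs_z2 (\<lambda>n. res n (f n) mod 2 ^ n)"
  have "res n y = res n (f n) mod 2 ^ n" for n
    unfolding y_def by (rule res_Abs_z2_coherent[OF coh])
  then have "res n y = res n (f n)" for n by simp
  then have "(2::z2) ^ n dvd y - f n" for n
    by (simp add: two_power_dvd_iff_res_eq_0 res_diff)
  then show ?thesis by blast
qed

lemma two_power_dvd_odd_power_minus_one:
  fixes y :: "'a::comm_ring_1"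
  shows "2 ^ Suc n dvd (1 + 2 * y) ^ (2 ^ n) - 1"
proof (induction n)
  case (Suc n)
  then obtain t where t: "(1 + 2 * y) ^ (2 ^ n) = 1 + 2 ^ Suc n * t"
    by (auto simp: dvd_def algebra_simps)
  have "(1 + 2 * y) ^ (2 ^ Suc n) = ((1 + 2 * y) ^ (2 ^ n)) ^ 2"
    by (simp add: power_mult[symmetric] mult.commute)
  then have "(1 + 2 * y) ^ (2 ^ Suc n) - 1 = 2 ^ Suc (Suc n) * (t + 2 ^ n * t ^ 2)"
    unfolding t by (simp add: power2_eq_square algebra_simps)
  then show ?case by simp
qed simp

lemma z2_eq_two_power_times_odd:
  assumes "(x::z2) \<noteq> 0"
  obtains a x' where "x = 2 ^ a * x'" "res (Suc 0) x' = 1"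
proof -
  have ex: "\<exists>n. \<not> (2::z2) ^ Suc n dvd x"
  proof (rule ccontr)
    assume "\<nexists>n. \<not> (2::z2) ^ Suc n dvd x"
    then have "(2::z2) ^ n dvd x" for n by (cases n) auto
    then show False using assms z2_eq_0_if_two_power_dvd by blast
  qed
  define a where "a = (LEAST n. \<not> (2::z2) ^ Suc n dvd x)"
  have not_dvd: "\<not> (2::z2) ^ Suc a dvd x"
    unfolding a_def by (rule LeastI_ex[OF ex])
  have "(2::z2) ^ a dvd x"
  proof (cases a)
    case (Suc b)
    then show ?thesis using not_less_Least[of b "\<lambda>n. \<not> (2::z2) ^ Suc n dvd x"] by (auto simp: a_def)
  qed simp
  then obtain x' where x': "x = 2 ^ a * x'" by (auto simp: dvd_def)
  have "res (Suc 0) x' \<noteq> 0"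
  proof
    assume "res (Suc 0) x' = 0"
    then obtain t where "x' = 2 * t"
      using two_power_dvd_iff_res_eq_0[of 1 x'] by (auto simp: dvd_def)
    then have "x = 2 ^ Suc a * t" using x' by simp
    then show False using not_dvd by simp
  qed
  then show ?thesis using that x' res_Suc_0_cases by blast
qed

lemma two_power_times_odd_neq_0:
  assumes "res (Suc 0) t = 1"
  shows "(2::z2) ^ j * t \<noteq> 0"
proof
  assume z: "(2::z2) ^ j * t = 0"
  have "res (Suc j) t mod 2 = 1"
    using res_mod[of "Suc 0" "Suc j" t] assms by simp
  then obtain q where q: "res (Suc j) t = 2 * q + 1"
    by (metis odd_iff_mod_2_eq_one oddE)
  have "res (Suc j) ((2::z2) ^ j * t) = (2 ^ j * res (Suc j) t) mod 2 ^ Suc j"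
    by (simp add: res_mult res_two_power mod_mult_left_eq)
  also have "\<dots> = (2 ^ Suc j * q + 2 ^ j) mod 2 ^ Suc j"
    unfolding q by (simp add: algebra_simps)
  also have "\<dots> = 2 ^ j" by simp
  finally show False using z by simp
qed

instance z2 :: idom
proof
  fix x y :: z2
  assume "x \<noteq> 0" "y \<noteq> 0"
  then obtain a x' b y' where "x = 2 ^ a * x'" "res (Suc 0) x' = 1" "y = 2 ^ b * y'" "res (Suc 0) y' = 1"
    by (metis z2_eq_two_power_times_odd)
  then have "x * y = 2 ^ (a + b) * (x' * y')" "res (Suc 0) (x' * y') = 1"
    by (simp_all add: res_mult power_add algebra_simps)
  then show "x * y \<noteq> 0" using two_power_times_odd_neq_0 by simp
qed

text \<open>An odd \<open>x\<close> is invertible: its inverse is the 2-adic limit of \<open>x ^ (2 ^ n - 1)\<close>,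
  since \<open>x ^ 2 ^ n \<rightarrow> 1\<close>.\<close>

lemma z2_unit_if_odd:
  assumes "res (Suc 0) x = 1"
  shows "(x :: z2) dvd 1"
proof -
  obtain y where y: "x = 1 + 2 * y"
    using assms two_power_dvd_iff_res_eq_0[of 1 "x - 1"] by (auto simp: res_diff res_one dvd_def algebra_simps)
  define w where "w n = x ^ (2 ^ n - 1)" for n
  have close: "(2::z2) ^ n dvd x ^ (2 ^ n) - 1" for n
    using two_power_dvd_odd_power_minus_one[of n y] y
    by (meson dvd_trans le_imp_power_dvd le_SucI order_refl)
  have xw: "x * w n = x ^ (2 ^ n)" for n
  proof -
    have "(2::nat) ^ n = Suc (2 ^ n - 1)" by simp
    then show ?thesis unfolding w_def by (metis power_Suc)
  qed
  have "(2::z2) ^ n dvd w (Suc n) - w n" for n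
  proof -
    have e: "(2::nat) ^ Suc n - 1 = (2 ^ n - 1) + 2 ^ n" by simp
    have "w (Suc n) = w n * x ^ (2 ^ n)" unfolding w_def e by (simp only: power_add)
    then have "w (Suc n) - w n = w n * (x ^ (2 ^ n) - 1)" by (simp add: algebra_simps)
    then show ?thesis using close by simp
  qed
  then obtain v where v: "\<And>n. (2::z2) ^ n dvd v - w n" using z2_cauchy_limit by blast
  have "(2::z2) ^ n dvd x * v - 1" for n
  proof -
    have "x * v - 1 = x * (v - w n) + (x ^ (2 ^ n) - 1)" by (simp add: xw[symmetric] algebra_simps)
    then show ?thesis using v[of n] close[of n] by (metis dvd_add dvd_mult)
  qed
  then have "x * v - 1 = 0" by (rule z2_eq_0_if_two_power_dvd)
  then have "x * v = 1" by simp
  then show ?thesis by (metis dvd_triv_left)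
qed

section \<open>The ring of integers \<open>\<int>\<^sub>2[\<surd>D]\<close>\<close>

text \<open>The discriminant is a type parameter, so that each ring \<open>\<int>\<^sub>2[\<surd>D]\<close> becomes an instance
  of \<open>comm_ring_1\<close>.\<close>

class ramified_disc =
  fixes disc :: "'a itself \<Rightarrow> int"
  assumes disc_cases: "disc TYPE('a) \<in> {2, -2, 10, -10, -1, -5}"

typedef ('a::ramified_disc) zsqrt = "UNIV :: (z2 \<times> z2) set"
  by simp

definition rat_part :: "'a::ramified_disc zsqrt \<Rightarrow> z2" where
  "rat_part x = fst (Rep_zsqrt x)"

definition sqrt_part :: "'a::ramified_disc zsqrt \<Rightarrow> z2" where
  "sqrt_part x = snd (Rep_zsqrt x)"

definition Zsqrt :: "z2 \<Rightarrow> z2 \<Rightarrow> 'a::ramified_disc zsqrt" where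
  "Zsqrt a b = Abs_zsqrt (a, b)"

lemma parts_Zsqrt [simp]: "rat_part (Zsqrt a b) = a" "sqrt_part (Zsqrt a b) = b"
  by (simp_all add: rat_part_def sqrt_part_def Zsqrt_def Abs_zsqrt_inverse)

lemma zsqrt_eq_iff: "x = y \<longleftrightarrow> rat_part x = rat_part y \<and> sqrt_part x = sqrt_part y"
  by (metis Rep_zsqrt_inject prod_eq_iff rat_part_def sqrt_part_def)

abbreviation disc_z2 :: "'a::ramified_disc itself \<Rightarrow> z2" where
  "disc_z2 t \<equiv> of_int (disc t)"

instantiation zsqrt :: (ramified_disc) comm_ring_1
begin

definition "0 = Zsqrt 0 0"
definition "1 = Zsqrt 1 0"
definition "x + y = Zsqrt (rat_part x + rat_part y) (sqrt_part x + sqrt_part y)"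
definition "- x = Zsqrt (- rat_part x) (- sqrt_part x)"
definition "x - y = Zsqrt (rat_part x - rat_part y) (sqrt_part x - sqrt_part y)"
definition "x * y = Zsqrt (rat_part x * rat_part y + disc_z2 TYPE('a) * (sqrt_part x * sqrt_part y))
                         (rat_part x * sqrt_part y + sqrt_part x * rat_part y)"

instance
  by standard (simp_all add: zsqrt_eq_iff zero_zsqrt_def one_zsqrt_def plus_zsqrt_def
      uminus_zsqrt_def minus_zsqrt_def times_zsqrt_def algebra_simps)

end

lemma parts_simps [simp]:
  fixes x y :: "'a::ramified_disc zsqrt"
  shows "rat_part (0 :: 'a zsqrt) = 0" "sqrt_part (0 :: 'a zsqrt) = 0"
    and "rat_part (1 :: 'a zsqrt) = 1" "sqrt_part (1 :: 'a zsqrt) = 0"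
    and "rat_part (x + y) = rat_part x + rat_part y" "sqrt_part (x + y) = sqrt_part x + sqrt_part y"
    and "rat_part (- x) = - rat_part x" "sqrt_part (- x) = - sqrt_part x"
    and "rat_part (x - y) = rat_part x - rat_part y" "sqrt_part (x - y) = sqrt_part x - sqrt_part y"
    and "rat_part (x * y) = rat_part x * rat_part y + disc_z2 TYPE('a) * (sqrt_part x * sqrt_part y)"
    and "sqrt_part (x * y) = rat_part x * sqrt_part y + sqrt_part x * rat_part y"
  by (simp_all add: zero_zsqrt_def one_zsqrt_def plus_zsqrt_def uminus_zsqrt_def minus_zsqrt_def
      times_zsqrt_def)

lemma parts_of_nat [simp]:
  "rat_part (of_nat n :: 'a::ramified_disc zsqrt) = of_nat n" "sqrt_part (of_nat n :: 'a zsqrt) = 0"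
  by (induction n) simp_all

lemma parts_of_int [simp]:
  "rat_part (of_int n :: 'a::ramified_disc zsqrt) = of_int n" "sqrt_part (of_int n :: 'a zsqrt) = 0"
  by (cases n rule: int_cases; simp)+

lemma parts_numeral [simp]:
  "rat_part (numeral n :: 'a::ramified_disc zsqrt) = numeral n" "sqrt_part (numeral n :: 'a zsqrt) = 0"
  using parts_of_nat[of "numeral n"] by simp_all

definition \<pi> :: "'a::ramified_disc zsqrt" where
  "\<pi> = (if odd (disc TYPE('a)) then Zsqrt 1 1 else Zsqrt 0 1)"

definition half_disc :: "'a::ramified_disc itself \<Rightarrow> int" where
  "half_disc t = (if odd (disc t) then (1 - disc t) div 2 else disc t div 2)"

lemma half_disc_odd: "odd (half_disc TYPE('a::ramified_disc))"
  using disc_cases[where 'a='a] by (auto simp: half_disc_def)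

lemma disc_eq_half_disc:
  "odd (disc TYPE('a::ramified_disc)) \<Longrightarrow> disc TYPE('a) = 1 - 2 * half_disc TYPE('a)"
  "even (disc TYPE('a::ramified_disc)) \<Longrightarrow> disc TYPE('a) = 2 * half_disc TYPE('a)"
  by (auto simp: half_disc_def)

lemma disc_z2_eq_half_disc:
  "odd (disc TYPE('a::ramified_disc)) \<Longrightarrow> disc_z2 TYPE('a) = 1 - 2 * of_int (half_disc TYPE('a))"
  "even (disc TYPE('a::ramified_disc)) \<Longrightarrow> disc_z2 TYPE('a) = 2 * of_int (half_disc TYPE('a))"
  using disc_eq_half_disc[where 'a='a] by simp_all

lemma disc_z2_neq: "disc_z2 TYPE('a::ramified_disc) \<noteq> 0" "disc_z2 TYPE('a) \<noteq> 1"
proof -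
  have "res 5 (disc_z2 TYPE('a)) \<notin> {res 5 0, res 5 1}"
    using disc_cases[where 'a='a] by (auto simp: res_of_int res_one)
  then show "disc_z2 TYPE('a) \<noteq> 0" "disc_z2 TYPE('a) \<noteq> 1" by auto
qed

section \<open>Units and the uniformizer\<close>

definition znorm :: "'a::ramified_disc zsqrt \<Rightarrow> z2" where
  "znorm x = rat_part x ^ 2 - disc_z2 TYPE('a) * sqrt_part x ^ 2"

lemma znorm_mult: "znorm (x * y) = znorm x * znorm (y :: 'a::ramified_disc zsqrt)"
  by (simp add: znorm_def power2_eq_square algebra_simps)

lemma unit_if_odd_znorm:
  fixes x :: "'a::ramified_disc zsqrt"
  assumes "res (Suc 0) (znorm x) = 1"
  shows "x dvd 1"
proof -
  obtain w where w: "znorm x * w = 1" using z2_unit_if_odd[OF assms] by (auto elim: dvdE)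
  have "x * Zsqrt (rat_part x * w) (- sqrt_part x * w) = 1"
    using w by (simp add: zsqrt_eq_iff znorm_def power2_eq_square algebra_simps)
  then show ?thesis by (metis dvd_triv_left)
qed

lemma res_Suc_0_two_mult [simp]: "res (Suc 0) (2 * z) = 0"
  using two_power_dvd_iff_res_eq_0[of 1 "2 * z"] by simp

lemma res_Suc_0_one_plus_two_mult: "res (Suc 0) (1 + 2 * z) = 1"
  by (simp add: res_add res_one)

lemma unit_one_plus_two_mult: "(1 + 2 * u :: 'a::ramified_disc zsqrt) dvd 1"
proof (rule unit_if_odd_znorm)
  have "znorm (1 + 2 * u) = 1 + 2 * (2 * rat_part u + 2 * rat_part u ^ 2
      - 2 * disc_z2 TYPE('a) * sqrt_part u ^ 2)"
    by (simp add: znorm_def power2_eq_square algebra_simps)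
  then show "res (Suc 0) (znorm (1 + 2 * u)) = 1" by (simp only: res_Suc_0_one_plus_two_mult)
qed

lemma unit_mult: "(x :: 'b::comm_monoid_mult) dvd 1 \<Longrightarrow> y dvd 1 \<Longrightarrow> x * y dvd 1"
  using mult_dvd_mono[of x 1 y 1] by simp

lemma odd_of_nat_unit:
  assumes "odd n"
  shows "(of_nat n :: 'a::ramified_disc zsqrt) dvd 1"
proof -
  obtain j where "n = 2 * j + 1" using assms by (auto elim: oddE)
  then have "(of_nat n :: 'a zsqrt) = 1 + 2 * of_nat j" by simp
  then show ?thesis using unit_one_plus_two_mult by simp
qed

lemma pi_square_eq: "\<exists>e. (\<pi> :: 'a::ramified_disc zsqrt) ^ 2 = 2 * e \<and> e dvd 1"
proof -
  define h where "h = (of_int (half_disc TYPE('a)) :: z2)"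
  obtain j where j: "half_disc TYPE('a) = 2 * j + 1" using half_disc_odd[where 'a='a] by (auto elim: oddE)
  have "h ^ 2 = 1 + 2 * of_int (2 * j ^ 2 + 2 * j)"
    unfolding h_def j by (simp add: power2_eq_square algebra_simps)
  then have h: "res (Suc 0) (h ^ 2) = 1" by (simp only: res_Suc_0_one_plus_two_mult)
  show ?thesis
  proof (cases "odd (disc TYPE('a))")
    case True
    have D: "disc_z2 TYPE('a) = 1 - 2 * h" using disc_z2_eq_half_disc(1)[OF True] by (simp add: h_def)
    define e :: "'a zsqrt" where "e = Zsqrt (1 - h) 1"
    have "\<pi> ^ 2 = 2 * e"
      using True by (simp add: \<pi>_def e_def zsqrt_eq_iff power2_eq_square D algebra_simps)
    moreover have "znorm e = h ^ 2"
      by (simp add: e_def znorm_def D power2_eq_square algebra_simps)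
    then have "e dvd 1" using h by (intro unit_if_odd_znorm) simp
    ultimately show ?thesis by blast
  next
    case False
    have D: "disc_z2 TYPE('a) = 2 * h" using disc_z2_eq_half_disc(2) False by (simp add: h_def)
    define e :: "'a zsqrt" where "e = Zsqrt h 0"
    have "\<pi> ^ 2 = 2 * e"
      using False by (simp add: \<pi>_def e_def zsqrt_eq_iff power2_eq_square D)
    moreover have "znorm e = h ^ 2"
      by (simp add: e_def znorm_def)
    then have "e dvd 1" using h by (intro unit_if_odd_znorm) simp
    ultimately show ?thesis by blast
  qed
qed

lemma two_eq_pi_mult: "\<exists>w. (2 :: 'a::ramified_disc zsqrt) = \<pi> * w"
proof -
  obtain e :: "'a zsqrt" where e: "\<pi> ^ 2 = 2 * e" "e dvd 1"
    using pi_square_eq by blast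
  obtain e' where "1 = e * e'" using e(2) by (rule dvdE)
  then have "2 = \<pi> ^ 2 * e'" unfolding e(1) by (simp add: mult.assoc)
  then have "2 = \<pi> * (\<pi> * e')" by (simp add: power2_eq_square mult.assoc)
  then show ?thesis by blast
qed

lemma pi_digit_decomposition:
  "\<exists>e y. (e = 0 \<or> e = 1) \<and> (x :: 'a::ramified_disc zsqrt) = of_int e + \<pi> * y"
proof -
  define c where "c = rat_part x - (if odd (disc TYPE('a)) then sqrt_part x else 0)"
  have x: "x = Zsqrt c 0 + \<pi> * Zsqrt (sqrt_part x) 0"
    by (simp add: zsqrt_eq_iff c_def \<pi>_def)
  define e where "e = res (Suc 0) c"
  have "res (Suc 0) (c - of_int e) = 0"
    using res_Suc_0_cases[of c] by (auto simp: e_def res_diff res_of_int)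
  then have "2 dvd c - of_int e" using two_power_dvd_iff_res_eq_0[of 1] by simp
  then obtain t where "c - of_int e = 2 * t" by (rule dvdE)
  then have t: "c = of_int e + 2 * t" by (simp add: algebra_simps)
  obtain w :: "'a zsqrt" where w: "2 = \<pi> * w" using two_eq_pi_mult by blast
  have "Zsqrt c 0 = of_int e + 2 * (Zsqrt t 0 :: 'a zsqrt)"
    by (simp add: zsqrt_eq_iff t)
  then have "x = of_int e + \<pi> * (w * Zsqrt t 0 + Zsqrt (sqrt_part x) 0)"
    using x w by (simp add: algebra_simps)
  moreover have "e = 0 \<or> e = 1" using res_Suc_0_cases by (simp add: e_def)
  ultimately show ?thesis by blast
qed

lemma pi_not_unit: "\<not> (\<pi> :: 'a::ramified_disc zsqrt) dvd 1"
proof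
  assume "(\<pi> :: 'a zsqrt) dvd 1"
  then obtain v where "\<pi> * v = (1 :: 'a zsqrt)" by (auto elim: dvdE)
  then have "znorm (\<pi> :: 'a zsqrt) * znorm v = znorm (1 :: 'a zsqrt)" by (metis znorm_mult)
  also have "znorm (1 :: 'a zsqrt) = 1" by (simp add: znorm_def)
  finally have "znorm (\<pi> :: 'a zsqrt) * znorm v = 1" .
  moreover have "znorm (\<pi> :: 'a zsqrt) = 2 * of_int (if odd (disc TYPE('a)) then half_disc TYPE('a)
      else - half_disc TYPE('a))"
    using disc_z2_eq_half_disc[where 'a='a] by (auto simp: znorm_def \<pi>_def)
  ultimately have "res (Suc 0) (2 * (of_int (if odd (disc TYPE('a)) then half_disc TYPE('a)
      else - half_disc TYPE('a)) * znorm v)) = res (Suc 0) 1"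
    by (simp add: mult.assoc)
  then show False by (simp add: res_one)
qed

lemma pi_dvd_imp_not_unit: "(\<pi> :: 'a::ramified_disc zsqrt) dvd u \<Longrightarrow> \<not> u dvd 1"
  using pi_not_unit dvd_trans by metis

lemma unit_iff_one_plus_pi_mult: "(x :: 'a::ramified_disc zsqrt) dvd 1 \<longleftrightarrow> (\<exists>t. x = 1 + \<pi> * t)"
proof
  assume x: "x dvd 1"
  obtain e y where e: "e = 0 \<or> e = 1" "x = of_int e + \<pi> * y" using pi_digit_decomposition by blast
  then show "\<exists>t. x = 1 + \<pi> * t" using pi_dvd_imp_not_unit[OF dvd_triv_left, of y] x by auto
next
  assume "\<exists>t. x = 1 + \<pi> * t"
  then obtain t where x: "x = 1 + \<pi> * t" ..
  obtain e :: "'a zsqrt" where e: "\<pi> ^ 2 = 2 * e" using pi_square_eq by blast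
  have "x * (1 - \<pi> * t) = 1 - \<pi> ^ 2 * t ^ 2"
    unfolding x by (simp add: power2_eq_square algebra_simps)
  also have "\<dots> = 1 + 2 * (- e * t ^ 2)" unfolding e by (simp add: algebra_simps)
  finally have "x * (1 - \<pi> * t) dvd 1" by (simp only: unit_one_plus_two_mult)
  then show "x dvd 1" by (rule dvd_mult_left)
qed

lemma pi_mult_eq_0: "(\<pi> :: 'a::ramified_disc zsqrt) * y = 0 \<Longrightarrow> y = 0"
proof (cases "odd (disc TYPE('a))")
  case True
  assume "\<pi> * y = 0"
  then have "rat_part y + disc_z2 TYPE('a) * sqrt_part y = 0" "rat_part y + sqrt_part y = 0"
    using True by (simp_all add: \<pi>_def zsqrt_eq_iff add.commute)
  moreover have "(disc_z2 TYPE('a) - 1) * sqrt_part y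
      = (rat_part y + disc_z2 TYPE('a) * sqrt_part y) - (rat_part y + sqrt_part y)"
    by (simp add: algebra_simps)
  ultimately have "sqrt_part y = 0" using disc_z2_neq(2)[where 'a='a] by simp
  then show "y = 0" using \<open>rat_part y + sqrt_part y = 0\<close> by (simp add: zsqrt_eq_iff)
next
  case False
  assume "\<pi> * y = 0"
  then show "y = 0" using False disc_z2_neq(1)[where 'a='a] by (simp add: \<pi>_def zsqrt_eq_iff)
qed

lemma pi_mult_cancel: "(\<pi> :: 'a::ramified_disc zsqrt) * x = \<pi> * y \<Longrightarrow> x = y"
  using pi_mult_eq_0[of "x - y"] by (simp add: algebra_simps)

lemma pi_power_mult_cancel: "(\<pi> :: 'a::ramified_disc zsqrt) ^ k * x = \<pi> ^ k * y \<Longrightarrow> x = y"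
  by (induction k) (auto simp: mult.assoc dest: pi_mult_cancel)

section \<open>Completeness and valuation\<close>

lemma parts_two_power [simp]:
  "rat_part ((2 :: 'a::ramified_disc zsqrt) ^ n) = 2 ^ n" "sqrt_part ((2 :: 'a zsqrt) ^ n) = 0"
  by (induction n) simp_all

lemma two_power_dvd_iff_parts:
  "(2 :: 'a::ramified_disc zsqrt) ^ n dvd x \<longleftrightarrow> (2::z2) ^ n dvd rat_part x \<and> (2::z2) ^ n dvd sqrt_part x"
proof
  assume "(2 :: 'a zsqrt) ^ n dvd x"
  then obtain y where "x = 2 ^ n * y" by (auto elim: dvdE)
  then show "(2::z2) ^ n dvd rat_part x \<and> (2::z2) ^ n dvd sqrt_part x" by simp
next
  assume "(2::z2) ^ n dvd rat_part x \<and> (2::z2) ^ n dvd sqrt_part x"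
  then obtain a b where "rat_part x = 2 ^ n * a" "sqrt_part x = 2 ^ n * b" unfolding dvd_def by blast
  then have "x = 2 ^ n * Zsqrt a b" by (simp add: zsqrt_eq_iff)
  then show "(2 :: 'a zsqrt) ^ n dvd x" by simp
qed

lemma zsqrt_eq_0_if_two_power_dvd: "(\<And>n. (2 :: 'a::ramified_disc zsqrt) ^ n dvd x) \<Longrightarrow> x = 0"
  by (simp add: two_power_dvd_iff_parts zsqrt_eq_iff z2_eq_0_if_two_power_dvd)

lemma zsqrt_cauchy_limit:
  assumes "\<And>n. (2 :: 'a::ramified_disc zsqrt) ^ n dvd f (Suc n) - f n"
  shows "\<exists>y. \<forall>n. (2 :: 'a zsqrt) ^ n dvd y - f n"
proof -
  have "\<exists>y1. \<forall>n. (2::z2) ^ n dvd y1 - rat_part (f n)"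
    by (rule z2_cauchy_limit) (use assms in \<open>simp add: two_power_dvd_iff_parts\<close>)
  moreover have "\<exists>y2. \<forall>n. (2::z2) ^ n dvd y2 - sqrt_part (f n)"
    by (rule z2_cauchy_limit) (use assms in \<open>simp add: two_power_dvd_iff_parts\<close>)
  ultimately obtain y1 y2 where y1: "\<forall>n. (2::z2) ^ n dvd y1 - rat_part (f n)"
    and y2: "\<forall>n. (2::z2) ^ n dvd y2 - sqrt_part (f n)" by blast
  have "(2 :: 'a zsqrt) ^ n dvd Zsqrt y1 y2 - f n" for n
    using y1 y2 by (simp add: two_power_dvd_iff_parts)
  then show ?thesis by blast
qed

text \<open>Without such a decomposition the leading \<open>\<pi>\<close>-adic digit of \<open>x\<close> would vanish at every step,
  making \<open>x\<close> divisible by every \<open>\<pi> ^ (2 * n)\<close>, hence by every \<open>2 ^ n\<close>.\<close>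

lemma pi_power_times_unit_exists:
  assumes "(x :: 'a::ramified_disc zsqrt) \<noteq> 0"
  shows "\<exists>r U. U dvd 1 \<and> x = \<pi> ^ r * U"
proof (rule ccontr)
  assume none: "\<nexists>r U. U dvd 1 \<and> x = \<pi> ^ r * U"
  have "\<exists>y. x = \<pi> ^ n * y" for n
  proof (induction n)
    case (Suc n)
    then obtain y where y: "x = \<pi> ^ n * y" by blast
    obtain e y' where e: "e = 0 \<or> e = 1" "y = of_int e + \<pi> * y'"
      using pi_digit_decomposition by blast
    have "e \<noteq> 1"
    proof
      assume "e = 1"
      then have "y dvd 1" using e unit_iff_one_plus_pi_mult by auto
      then show False using none y by blast
    qed
    then have "x = \<pi> ^ Suc n * y'" using y e by (simp add: mult.assoc)
    then show ?case by blast
  qed simp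
  have "(2 :: 'a zsqrt) ^ n dvd x" for n
  proof -
    obtain y where y: "x = \<pi> ^ (2 * n) * y" using \<open>\<And>n. \<exists>y. x = \<pi> ^ n * y\<close> by blast
    obtain e :: "'a zsqrt" where "\<pi> ^ 2 = 2 * e" using pi_square_eq by blast
    then have "x = 2 ^ n * (e ^ n * y)" unfolding y by (simp add: power_mult power_mult_distrib)
    then show ?thesis by simp
  qed
  then show False using assms zsqrt_eq_0_if_two_power_dvd by blast
qed

lemma pi_power_times_unit_unique:
  assumes "U dvd 1" "U' dvd 1" "(\<pi> :: 'a::ramified_disc zsqrt) ^ r * U = \<pi> ^ r' * U'"
  shows "r = r' \<and> U = U'"
proof -
  have lt: False if "U dvd 1" "(\<pi> :: 'a zsqrt) ^ r * U = \<pi> ^ r' * U'" "r < r'"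
    for U U' :: "'a zsqrt" and r r'
  proof -
    obtain q where "r' = r + Suc q" using \<open>r < r'\<close> less_iff_Suc_add by auto
    then have "\<pi> ^ r * U = \<pi> ^ r * (\<pi> * (\<pi> ^ q * U'))"
      using that(2) by (simp add: power_add mult.assoc)
    then have "U = \<pi> * (\<pi> ^ q * U')" by (rule pi_power_mult_cancel)
    then have "\<pi> dvd U" by simp
    with pi_dvd_imp_not_unit that(1) show False by blast
  qed
  have "r = r'"
    using lt[OF assms(1,3)] lt[OF assms(2) assms(3)[symmetric]] by (cases r r' rule: linorder_cases) auto
  then show ?thesis using assms(3) pi_power_mult_cancel by blast
qed

section \<open>Hensel's lemma for \<open>c + u Y ^ d\<close>\<close>

lemma power_add_first_order:
  "\<exists>z. ((y :: 'b::comm_ring_1) + h) ^ n = y ^ n + of_nat n * y ^ (n - 1) * h + h ^ 2 * z"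
proof (induction n)
  case (Suc n)
  then obtain z where z: "(y + h) ^ n = y ^ n + of_nat n * y ^ (n - 1) * h + h ^ 2 * z" by blast
  show ?case
  proof (cases n)
    case (Suc n')
    have "(y + h) ^ Suc n = y ^ Suc n + of_nat (Suc n) * y ^ (Suc n - 1) * h
        + h ^ 2 * (of_nat n * y ^ n' + z * (y + h))"
      unfolding power_Suc2[of _ n] z using Suc by (simp add: power2_eq_square algebra_simps)
    then show ?thesis by blast
  qed (auto intro: exI[of _ 0])
qed (auto intro: exI[of _ 0])

lemma unit_square_eq: "(v :: 'a::ramified_disc zsqrt) dvd 1 \<Longrightarrow> \<exists>r. v ^ 2 = 1 + 2 * r"
proof -
  assume "v dvd 1"
  then obtain t where t: "v = 1 + \<pi> * t" using unit_iff_one_plus_pi_mult by blast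
  obtain e :: "'a zsqrt" where e: "\<pi> ^ 2 = 2 * e" using pi_square_eq by blast
  have "v ^ 2 = 1 + 2 * (\<pi> * t) + \<pi> ^ 2 * t ^ 2"
    unfolding t by (simp add: power2_eq_square algebra_simps)
  also have "\<dots> = 1 + 2 * (\<pi> * t + e * t ^ 2)" unfolding e by (simp add: algebra_simps)
  finally show ?thesis by blast
qed

text \<open>The derivative \<open>u d Y ^ (d - 1) = 2 v\<close> has valuation that of \<open>2\<close>, and
  since \<open>v ^ 2 \<equiv> 1 (mod 2)\<close> the correction \<open>-2 ^ k w v\<close> may use \<open>v\<close> in place of \<open>v\<inverse>\<close>.\<close>

lemma hensel_step:
  fixes c u Y :: "'a::ramified_disc zsqrt"
  assumes k: "k \<ge> 2" and u: "u dvd 1" and Y: "Y dvd 1" and m: "odd m"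
    and f: "2 ^ (k + 1) dvd c + u * Y ^ (2 * m)"
  shows "\<exists>Y'. Y' dvd 1 \<and> 2 ^ k dvd Y' - Y \<and> 2 ^ (k + 2) dvd c + u * Y' ^ (2 * m)"
proof -
  obtain w where w: "c + u * Y ^ (2 * m) = 2 ^ (k + 1) * w" using f by (auto elim: dvdE)
  define v where "v = u * of_nat m * Y ^ (2 * m - 1)"
  have "v dvd 1"
    unfolding v_def by (intro unit_mult u odd_of_nat_unit[OF m] dvd_power_same[of Y 1, simplified] Y)
  then obtain r where r: "v ^ 2 = 1 + 2 * r" using unit_square_eq by blast
  define h where "h = - (2 ^ k * w * v)"
  obtain z where z: "(Y + h) ^ (2 * m) = Y ^ (2 * m) + of_nat (2 * m) * Y ^ (2 * m - 1) * h + h ^ 2 * z"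
    using power_add_first_order by blast
  have "2 * k = (k + 2) + (k - 2)" using k by simp
  then have "(2 :: 'a zsqrt) ^ (2 * k) = 2 ^ (k + 2) * 2 ^ (k - 2)" by (metis power_add)
  then have h2: "h ^ 2 = 2 ^ (k + 2) * (2 ^ (k - 2) * (w * v) ^ 2)"
    unfolding h_def by (simp add: power_mult_distrib power_mult[symmetric] mult.commute)
  have "c + u * (Y + h) ^ (2 * m) = (c + u * Y ^ (2 * m)) + 2 * v * h + u * h ^ 2 * z"
    unfolding z v_def by (simp add: algebra_simps)
  also have "\<dots> = 2 ^ (k + 1) * w * (1 - v ^ 2) + u * h ^ 2 * z"
    unfolding w by (simp add: h_def power2_eq_square algebra_simps)
  also have "\<dots> = 2 ^ (k + 2) * (- w * r + u * 2 ^ (k - 2) * (w * v) ^ 2 * z)"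
    unfolding r h2 by (simp add: algebra_simps)
  finally have "2 ^ (k + 2) dvd c + u * (Y + h) ^ (2 * m)" by simp
  moreover have "Y + h dvd 1"
  proof -
    obtain t where t: "Y = 1 + \<pi> * t" using Y unit_iff_one_plus_pi_mult by blast
    obtain w' :: "'a zsqrt" where w': "2 = \<pi> * w'" using two_eq_pi_mult by blast
    have "(2 :: 'a zsqrt) ^ k = \<pi> * (w' * 2 ^ (k - 1))"
      using k by (simp add: w' power_eq_if[of _ k] mult.assoc)
    then have "Y + h = 1 + \<pi> * (t - w' * 2 ^ (k - 1) * w * v)"
      unfolding t h_def by (simp add: algebra_simps)
    then show ?thesis using unit_iff_one_plus_pi_mult by blast
  qed
  moreover have "2 ^ k dvd (Y + h) - Y" by (simp add: h_def)
  ultimately show ?thesis by blast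
qed

lemma hensel_lift_zero:
  fixes c u Y\<^sub>0 :: "'a::ramified_disc zsqrt"
  assumes u: "u dvd 1" and Y\<^sub>0: "Y\<^sub>0 dvd 1" and m: "odd m"
    and f: "2 ^ 3 dvd c + u * Y\<^sub>0 ^ (2 * m)"
  shows "\<exists>Y. c + u * Y ^ (2 * m) = 0"
proof -
  let ?approx = "\<lambda>n Y. Y dvd 1 \<and> 2 ^ (n + 3) dvd c + u * Y ^ (2 * m)"
  obtain Ys where Ys: "\<And>n. ?approx n (Ys n) \<and> 2 ^ (n + 2) dvd Ys (Suc n) - Ys n"
  proof -
    have "\<exists>Ys. \<forall>n. ?approx n (Ys n) \<and> 2 ^ (n + 2) dvd Ys (Suc n) - Ys n"
    proof (rule dependent_nat_choice)
      show "\<exists>Y. ?approx 0 Y" using Y\<^sub>0 f by auto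
      show "\<exists>Y'. ?approx (Suc n) Y' \<and> 2 ^ (n + 2) dvd Y' - Y" if "?approx n Y" for n Y
        using hensel_step[of "n + 2" u Y m c] that u m by (simp add: numeral_3_eq_3) blast
    qed
    then show ?thesis using that by blast
  qed
  have "(2 :: 'a zsqrt) ^ n dvd Ys (Suc n) - Ys n" for n
    using Ys[of n] by (meson dvd_trans le_add1 le_imp_power_dvd)
  then obtain Y where Y: "\<And>n. (2 :: 'a zsqrt) ^ n dvd Y - Ys n" using zsqrt_cauchy_limit by blast
  have "(2 :: 'a zsqrt) ^ n dvd c + u * Y ^ (2 * m)" for n
  proof -
    have eq: "c + u * Y ^ (2 * m) = (c + u * Ys n ^ (2 * m)) + u * (Y ^ (2 * m) - Ys n ^ (2 * m))"
      by (simp add: algebra_simps)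
    have "(2 :: 'a zsqrt) ^ n dvd c + u * Ys n ^ (2 * m)"
      using Ys[of n] by (meson dvd_trans le_add1 le_imp_power_dvd)
    moreover have "(2 :: 'a zsqrt) ^ n dvd Y ^ (2 * m) - Ys n ^ (2 * m)"
      using Y[of n] dvd_triv_left[of "Y - Ys n"] unfolding power_diff_sumr2[of Y "2 * m" "Ys n"]
      by (rule dvd_trans)
    ultimately show ?thesis unfolding eq by (blast intro: dvd_add dvd_mult)
  qed
  then have "c + u * Y ^ (2 * m) = 0" by (rule zsqrt_eq_0_if_two_power_dvd)
  then show ?thesis by blast
qed

section \<open>Reduction modulo 8\<close>

text \<open>Residues modulo 8 of \<open>a + b \<surd>D\<close> are encoded as pairs \<open>(a mod 8, b mod 8)\<close>.
  The certificate below is checked by evaluation for each of the six discriminants: the four units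
  \<open>1, 1 + \<pi>, 1 + 2\<pi>, (1 + \<pi>)(1 + 2\<pi>)\<close> have eighth power \<open>\<equiv> 1\<close>; every \<open>1 + \<pi> t\<close> passes the parity
  test \<open>unit8\<close> for units; and for every \<open>u\<close> passing it and every \<open>v \<equiv> u (mod 2)\<close> there is
  \<open>j \<in> {0, 1}\<close> such that both \<open>\<pi>\<^sup>2 + j \<pi>\<^sup>3\<close> and its negative are of the form \<open>u X\<^sup>2 + v Y\<^sup>2\<close>
  with \<open>X, Y\<close> among those four units.\<close>

definition add8 :: "int \<times> int \<Rightarrow> int \<times> int \<Rightarrow> int \<times> int" where
  "add8 x y = ((fst x + fst y) mod 8, (snd x + snd y) mod 8)"

definition mul8 :: "int \<Rightarrow> int \<times> int \<Rightarrow> int \<times> int \<Rightarrow> int \<times> int" where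
  "mul8 D x y = ((fst x * fst y + D * (snd x * snd y)) mod 8, (fst x * snd y + snd x * fst y) mod 8)"

definition neg8 :: "int \<times> int \<Rightarrow> int \<times> int" where
  "neg8 x = ((- fst x) mod 8, (- snd x) mod 8)"

fun pow8 :: "int \<Rightarrow> int \<times> int \<Rightarrow> nat \<Rightarrow> int \<times> int" where
  "pow8 D x 0 = (1, 0)"
| "pow8 D x (Suc n) = mul8 D (pow8 D x n) x"

definition residues8 :: "(int \<times> int) list" where
  "residues8 = List.product [0..7] [0..7]"

definition pi8 :: "int \<Rightarrow> int \<times> int" where
  "pi8 D = (if odd D then (1, 1) else (0, 1))"

definition unit_reps8 :: "int \<Rightarrow> (int \<times> int) list" where
  "unit_reps8 D = [(1, 0), add8 (1, 0) (pi8 D), add8 (1, 0) (mul8 D (2, 0) (pi8 D)),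
     mul8 D (add8 (1, 0) (pi8 D)) (add8 (1, 0) (mul8 D (2, 0) (pi8 D)))]"

definition target8 :: "int \<Rightarrow> int \<Rightarrow> int \<times> int" where
  "target8 D j = add8 (pow8 D (pi8 D) 2) (mul8 D (j, 0) (pow8 D (pi8 D) 3))"

definition unit8 :: "int \<Rightarrow> int \<times> int \<Rightarrow> bool" where
  "unit8 D u \<longleftrightarrow> (if odd D then odd (fst u + snd u) else odd (fst u))"

definition represents8 :: "int \<Rightarrow> (int \<times> int) list \<Rightarrow> int \<times> int \<Rightarrow> int \<times> int \<Rightarrow> int \<times> int \<Rightarrow> bool" where
  "represents8 D S u v c \<longleftrightarrow> list_ex (\<lambda>x. list_ex (\<lambda>y. add8 (mul8 D u x) (mul8 D v y) = c) S) S"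

definition pairs_represent8 :: "int \<Rightarrow> (int \<times> int) list \<Rightarrow> (int \<times> int) list \<Rightarrow> bool" where
  "pairs_represent8 D S T \<longleftrightarrow> list_all (\<lambda>u. list_all (\<lambda>v.
     \<not> unit8 D u \<or> odd (fst u - fst v) \<or> odd (snd u - snd v) \<or>
     list_ex (\<lambda>c. represents8 D S u v c \<and> represents8 D S u v (neg8 c)) T) residues8) residues8"

definition mod8_certificate :: "int \<Rightarrow> bool" where
  "mod8_certificate D \<longleftrightarrow>
     list_all (\<lambda>x. pow8 D x 8 = (1, 0)) (unit_reps8 D) \<and>
     list_all (\<lambda>t. unit8 D (add8 (1, 0) (mul8 D (pi8 D) t))) residues8 \<and>
     pairs_represent8 D (map (\<lambda>x. pow8 D x 2) (unit_reps8 D)) (map (target8 D) [0, 1])"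

lemma mod8_certificate: "D \<in> {2, -2, 10, -10, -1, -5} \<Longrightarrow> mod8_certificate D"
proof -
  have "mod8_certificate 2" "mod8_certificate (-2)" "mod8_certificate 10" "mod8_certificate (-10)"
    "mod8_certificate (-1)" "mod8_certificate (-5)"
    by code_simp+
  then show "D \<in> {2, -2, 10, -10, -1, -5} \<Longrightarrow> mod8_certificate D" by auto
qed

definition res8 :: "'a::ramified_disc zsqrt \<Rightarrow> int \<times> int" where
  "res8 x = (res 3 (rat_part x), res 3 (sqrt_part x))"

lemma res8_add: "res8 (x + y) = add8 (res8 x) (res8 y)"
  by (simp add: res8_def add8_def res_add)

lemma res8_mult: "res8 (x * y) = mul8 (disc TYPE('a)) (res8 x) (res8 (y :: 'a::ramified_disc zsqrt))"
proof -
  have "(2::int) ^ 3 = 8" by simp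
  then show ?thesis
    by (simp only: res8_def mul8_def parts_simps res_add res_mult res_of_int fst_conv snd_conv
        mod_mult_eq mod_add_eq)
qed

lemma res8_uminus: "res8 (- x) = neg8 (res8 x)"
  by (simp add: res8_def neg8_def res_uminus)

lemma res8_one: "res8 (1 :: 'a::ramified_disc zsqrt) = (1, 0)"
  by (simp add: res8_def res_one)

lemma res8_of_int: "res8 (of_int j :: 'a::ramified_disc zsqrt) = (j mod 8, 0)"
  by (simp add: res8_def res_of_int)

lemma res8_pi: "res8 (\<pi> :: 'a::ramified_disc zsqrt) = pi8 (disc TYPE('a))"
  by (simp add: \<pi>_def res8_def pi8_def res_one)

lemma res8_power: "res8 (x ^ n) = pow8 (disc TYPE('a)) (res8 x) n" for x :: "'a::ramified_disc zsqrt"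
  by (induction n) (simp_all add: res8_one res8_mult power_Suc2 del: power_Suc)

lemma res8_in_residues8: "res8 x \<in> set residues8"
  using res_bounds[of 3 "rat_part x"] res_bounds[of 3 "sqrt_part x"] by (auto simp: res8_def residues8_def)

lemma res8_eq_iff: "res8 x = res8 y \<longleftrightarrow> (2 :: 'a::ramified_disc zsqrt) ^ 3 dvd x - y"
proof
  assume "res8 x = res8 y"
  then show "(2 :: 'a zsqrt) ^ 3 dvd x - y"
    unfolding two_power_dvd_iff_parts two_power_dvd_iff_res_eq_0 parts_simps res_diff
    by (simp add: res8_def)
next
  assume "(2 :: 'a zsqrt) ^ 3 dvd x - y"
  then have "(2::z2) ^ 3 dvd rat_part x - rat_part y" "(2::z2) ^ 3 dvd sqrt_part x - sqrt_part y"
    unfolding two_power_dvd_iff_parts parts_simps by simp_all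
  then show "res8 x = res8 y"
    using res_eq_if_two_power_dvd_diff by (simp add: res8_def)
qed

lemma res8_parity:
  assumes "2 dvd (u - v :: 'a::ramified_disc zsqrt)"
  shows "even (fst (res8 u) - fst (res8 v))" "even (snd (res8 u) - snd (res8 v))"
proof -
  have "(2::z2) ^ 1 dvd rat_part u - rat_part v" "(2::z2) ^ 1 dvd sqrt_part u - sqrt_part v"
    using assms two_power_dvd_iff_parts[of 1 "u - v"] by simp_all
  then have "res 1 (rat_part u) = res 1 (rat_part v)" "res 1 (sqrt_part u) = res 1 (sqrt_part v)"
    by (simp_all only: res_eq_if_two_power_dvd_diff)
  moreover have "res 3 z mod 2 = res 1 z" for z using res_mod[of 1 3 z] by simp
  ultimately show "even (fst (res8 u) - fst (res8 v))" "even (snd (res8 u) - snd (res8 v))"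
    by (simp_all add: res8_def even_iff_mod_2_eq_zero mod_diff_eq[symmetric])
qed

definition unit_reps :: "'a::ramified_disc zsqrt list" where
  "unit_reps = [1, 1 + \<pi>, 1 + 2 * \<pi>, (1 + \<pi>) * (1 + 2 * \<pi>)]"

lemma res8_unit_reps: "map res8 (unit_reps :: 'a::ramified_disc zsqrt list) = unit_reps8 (disc TYPE('a))"
proof -
  have "res8 (2 :: 'a zsqrt) = (2, 0)" using res8_of_int[of 2] by simp
  then show ?thesis by (simp add: unit_reps_def unit_reps8_def res8_add res8_mult res8_one res8_pi)
qed

lemma unit_reps_units:
  assumes "X \<in> set (unit_reps :: 'a::ramified_disc zsqrt list)"
  shows "X dvd 1"
proof -
  have "(1 + \<pi> :: 'a zsqrt) dvd 1" "(1 + 2 * \<pi> :: 'a zsqrt) dvd 1"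
    unfolding unit_iff_one_plus_pi_mult by (auto intro: exI[of _ 1] exI[of _ 2] simp: mult.commute)
  then show ?thesis using assms unit_mult by (auto simp: unit_reps_def)
qed

lemma unit_reps_power_8:
  assumes "X \<in> set (unit_reps :: 'a::ramified_disc zsqrt list)"
  shows "2 ^ 3 dvd X ^ 8 - 1"
proof -
  have "list_all (\<lambda>x. pow8 (disc TYPE('a)) x 8 = (1, 0)) (unit_reps8 (disc TYPE('a)))"
    using mod8_certificate[OF disc_cases[where 'a='a]] by (simp add: mod8_certificate_def)
  moreover have "res8 X \<in> set (unit_reps8 (disc TYPE('a)))"
    unfolding res8_unit_reps[symmetric, where 'a='a] using assms by simp
  ultimately have "res8 (X ^ 8) = res8 (1 :: 'a zsqrt)"
    by (simp add: list_all_iff res8_power res8_one)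
  then show ?thesis by (simp only: res8_eq_iff)
qed

text \<open>Since \<open>X ^ 8 \<equiv> 1\<close>, the square \<open>X ^ 2\<close> is congruent to \<open>X ^ (2 * m)\<close> for \<open>m \<equiv> 1 (mod 4)\<close> and
  to \<open>(X ^ 3) ^ (2 * m)\<close> for \<open>m \<equiv> 3 (mod 4)\<close>.\<close>

lemma square_eq_power_mod8:
  assumes X: "X \<in> set (unit_reps :: 'a::ramified_disc zsqrt list)" and m: "odd m"
  shows "\<exists>Z. Z dvd 1 \<and> 2 ^ 3 dvd Z ^ (2 * m) - X ^ 2"
proof -
  have shift: "2 ^ 3 dvd X ^ (8 * j + 2) - X ^ 2" for j
  proof -
    have "2 ^ 3 dvd (X ^ 8) ^ j - 1 ^ j"
      using unit_reps_power_8[OF X] dvd_triv_left unfolding power_diff_sumr2[of "X ^ 8" j 1]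
      by (rule dvd_trans)
    then have "2 ^ 3 dvd ((X ^ 8) ^ j - 1) * X ^ 2" by simp
    moreover have "X ^ (8 * j + 2) = (X ^ 8) ^ j * X ^ 2" by (simp only: power_add power_mult)
    ultimately show ?thesis by (simp add: algebra_simps)
  qed
  consider j where "m = 4 * j + 1" | j where "m = 4 * j + 3"
  proof -
    have "m mod 4 = 1 \<or> m mod 4 = 3" using m by presburger
    then show ?thesis using that div_mult_mod_eq[of m 4] by (metis mult.commute)
  qed
  then show ?thesis
  proof cases
    case 1
    then show ?thesis using shift[of j] unit_reps_units[OF X] by (intro exI[of _ X]) simp
  next
    case 2
    then have "3 * (2 * m) = 8 * (3 * j + 2) + 2" by simp
    then have "(X ^ 3) ^ (2 * m) = X ^ (8 * (3 * j + 2) + 2)" by (metis power_mult)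
    then show ?thesis using shift[of "3 * j + 2"] unit_reps_units[OF X]
      by (intro exI[of _ "X ^ 3"]) (simp add: dvd_power_same[of X 1, simplified])
  qed
qed

definition target :: "int \<Rightarrow> 'a::ramified_disc zsqrt" where
  "target j = \<pi> ^ 2 + of_int j * \<pi> ^ 3"

lemma res8_target: "j = 0 \<or> j = 1 \<Longrightarrow> res8 (target j :: 'a::ramified_disc zsqrt) = target8 (disc TYPE('a)) j"
  by (auto simp: target_def target8_def res8_add res8_mult res8_power res8_pi res8_of_int)

definition represents_mod8 :: "'a::ramified_disc zsqrt \<Rightarrow> 'a zsqrt \<Rightarrow> 'a zsqrt \<Rightarrow> bool" where
  "represents_mod8 u v c \<longleftrightarrow> (\<exists>X\<in>set unit_reps. \<exists>Y\<in>set unit_reps. 2 ^ 3 dvd u * X ^ 2 + v * Y ^ 2 - c)"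

lemma represents_mod8_if_represents8:
  fixes u v c :: "'a::ramified_disc zsqrt"
  assumes "represents8 (disc TYPE('a)) (map (\<lambda>x. pow8 (disc TYPE('a)) x 2) (unit_reps8 (disc TYPE('a))))
    (res8 u) (res8 v) (res8 c)"
  shows "represents_mod8 u v c"
proof -
  have "map (\<lambda>x. pow8 (disc TYPE('a)) x 2) (unit_reps8 (disc TYPE('a))) = map (\<lambda>X. res8 (X ^ 2)) (unit_reps :: 'a zsqrt list)"
    by (simp add: res8_unit_reps[symmetric] res8_power)
  then obtain X Y where "X \<in> set (unit_reps :: 'a zsqrt list)" "Y \<in> set (unit_reps :: 'a zsqrt list)"
    "res8 (u * X ^ 2 + v * Y ^ 2) = res8 c"
    using assms by (auto simp: represents8_def list_ex_iff res8_add res8_mult)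
  then show ?thesis unfolding represents_mod8_def res8_eq_iff by blast
qed

lemma unit_pair_represents_target:
  fixes u v :: "'a::ramified_disc zsqrt"
  assumes u: "u dvd 1" and uv: "2 dvd u - v"
  shows "\<exists>j. (j = 0 \<or> j = 1) \<and> represents_mod8 u v (target j) \<and> represents_mod8 u v (- target j)"
proof -
  let ?D = "disc TYPE('a)" and ?S = "map (\<lambda>x. pow8 (disc TYPE('a)) x 2) (unit_reps8 (disc TYPE('a)))"
  have cert: "mod8_certificate ?D" using mod8_certificate[OF disc_cases[where 'a='a]] .
  obtain t where t: "u = 1 + \<pi> * t" using u unit_iff_one_plus_pi_mult by blast
  have "unit8 ?D (res8 u)"
    using cert res8_in_residues8[of t] unfolding mod8_certificate_def list_all_iff
    by (simp add: t res8_add res8_mult res8_one res8_pi)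
  then have "\<exists>c\<in>set (map (target8 ?D) [0, 1]). represents8 ?D ?S (res8 u) (res8 v) c
      \<and> represents8 ?D ?S (res8 u) (res8 v) (neg8 c)"
    using cert res8_parity[OF uv] res8_in_residues8[of u] res8_in_residues8[of v]
    unfolding mod8_certificate_def pairs_represent8_def list_all_iff list_ex_iff by blast
  then obtain j where "j = 0 \<or> j = 1" "represents8 ?D ?S (res8 u) (res8 v) (res8 (target j :: 'a zsqrt))"
    "represents8 ?D ?S (res8 u) (res8 v) (res8 (- target j :: 'a zsqrt))"
    using res8_target[of _, where 'a='a] by (auto simp: res8_uminus)
  then show ?thesis using represents_mod8_if_represents8 by blast
qed

lemma represents_mod8_by_powers:
  assumes "represents_mod8 u v c" and "odd m"
  shows "\<exists>Z\<^sub>1 Z\<^sub>2. Z\<^sub>1 dvd 1 \<and> Z\<^sub>2 dvd 1 \<and> 2 ^ 3 dvd u * Z\<^sub>1 ^ (2 * m) + v * Z\<^sub>2 ^ (2 * m) - c"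
proof -
  obtain X Y where "X \<in> set unit_reps" "Y \<in> set unit_reps" and XY: "2 ^ 3 dvd u * X ^ 2 + v * Y ^ 2 - c"
    using assms(1) by (auto simp: represents_mod8_def)
  then obtain Z\<^sub>1 Z\<^sub>2 where Z: "Z\<^sub>1 dvd 1" "Z\<^sub>2 dvd 1"
    "2 ^ 3 dvd Z\<^sub>1 ^ (2 * m) - X ^ 2" "2 ^ 3 dvd Z\<^sub>2 ^ (2 * m) - Y ^ 2"
    using square_eq_power_mod8 assms(2) by meson
  have "u * Z\<^sub>1 ^ (2 * m) + v * Z\<^sub>2 ^ (2 * m) - c
      = (u * X ^ 2 + v * Y ^ 2 - c) + u * (Z\<^sub>1 ^ (2 * m) - X ^ 2) + v * (Z\<^sub>2 ^ (2 * m) - Y ^ 2)"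
    by (simp add: algebra_simps)
  then have "2 ^ 3 dvd u * Z\<^sub>1 ^ (2 * m) + v * Z\<^sub>2 ^ (2 * m) - c"
    by (simp only:) (intro dvd_add dvd_mult XY Z(3,4))
  then show ?thesis using Z(1,2) by blast
qed

section \<open>Zeros of diagonal forms with six paired variables\<close>

lemma two_valued_pigeonhole:
  assumes "finite B" "3 \<le> card B" "f ` B \<subseteq> {a, b}"
  shows "\<exists>x\<in>B. \<exists>y\<in>B. x \<noteq> y \<and> f x = f y"
proof -
  have "card (f ` B) \<le> card {a, b}" using assms(3) by (rule card_mono[rotated]) simp
  also have "\<dots> \<le> 2" by (simp add: card_insert_if)
  finally have "\<not> inj_on f B" using assms(2) by (intro pigeonhole) simp
  then show ?thesis unfolding inj_on_def by blast
qed

lemma two_valued_disjoint_pairs: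
  assumes "finite I" "2 * n + 1 \<le> card I" "f ` I \<subseteq> {a, b}"
  shows "\<exists>v. inj_on v {..<2 * n} \<and> v ` {..<2 * n} \<subseteq> I \<and> (\<forall>k<n. f (v (2 * k)) = f (v (2 * k + 1)))"
  using assms
proof (induction n arbitrary: I)
  case (Suc n)
  obtain x y where xy: "x \<in> I" "y \<in> I" "x \<noteq> y" "f x = f y"
    using two_valued_pigeonhole[OF Suc.prems(1) _ Suc.prems(3)] Suc.prems(2) by auto
  have "2 * n + 1 \<le> card (I - {x, y})"
    using Suc.prems(1,2) xy by (simp add: card_Diff_subset)
  then obtain v where v: "inj_on v {..<2 * n}" "v ` {..<2 * n} \<subseteq> I - {x, y}"
    "\<forall>k<n. f (v (2 * k)) = f (v (2 * k + 1))"
    using Suc.IH[of "I - {x, y}"] Suc.prems by auto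
  define w where "w = v(2 * n := x, 2 * n + 1 := y)"
  have range: "k < 2 * n \<or> k = 2 * n \<or> k = 2 * n + 1" if "k < 2 * Suc n" for k
    using that by auto
  have vI: "v k \<in> I - {x, y}" if "k < 2 * n" for k using v(2) that by auto
  have "inj_on w {..<2 * Suc n}"
  proof (rule inj_onI)
    fix i j assume "i \<in> {..<2 * Suc n}" "j \<in> {..<2 * Suc n}" "w i = w j"
    with range[of i] range[of j] show "i = j"
      using v(1) vI[of i] vI[of j] xy(3) by (auto simp: w_def inj_on_def)
  qed
  moreover have "w ` {..<2 * Suc n} \<subseteq> I"
    using range vI xy(1,2) by (auto simp: w_def)
  moreover have "\<forall>k<Suc n. f (w (2 * k)) = f (w (2 * k + 1))"
    using v(3) xy(4) by (auto simp: w_def less_Suc_eq)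
  ultimately show ?case by blast
qed simp

lemma paired_units_sum_mod8:
  fixes U :: "nat \<Rightarrow> 'a::ramified_disc zsqrt"
  assumes units: "\<forall>k<6. U k dvd 1" and pairs: "\<forall>k<3. 2 dvd U (2 * k) - U (2 * k + 1)" and m: "odd m"
  shows "\<exists>q Z. inj_on q {..<4::nat} \<and> q ` {..<4} \<subseteq> {..<6} \<and> (\<forall>i<4. Z i dvd 1) \<and>
    2 ^ 3 dvd (\<Sum>i<4. U (q i) * Z i ^ (2 * m))"
proof -
  let ?rep = "\<lambda>k j. represents_mod8 (U (2 * k)) (U (2 * k + 1)) (target j)
    \<and> represents_mod8 (U (2 * k)) (U (2 * k + 1)) (- target j)"
  have "\<exists>j. (j = 0 \<or> j = 1) \<and> ?rep k j" if "k < 3" for k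
    using unit_pair_represents_target units[rule_format, of "2 * k"] pairs[rule_format, OF that] that
    by simp
  then have "\<forall>k\<in>{..<3}. \<exists>j. (j = 0 \<or> j = 1) \<and> ?rep k j" by simp
  from bchoice[OF this] obtain J where J: "\<forall>k\<in>{..<3}. (J k = 0 \<or> J k = 1) \<and> ?rep k (J k)" ..
  then have "J ` {..<3} \<subseteq> {0, 1}" by auto
  then obtain k\<^sub>1 k\<^sub>2 where k: "k\<^sub>1 < 3" "k\<^sub>2 < 3" "k\<^sub>1 \<noteq> k\<^sub>2" "J k\<^sub>1 = J k\<^sub>2"
    using two_valued_pigeonhole[of "{..<3::nat}" J 0 1] by auto
  have rep\<^sub>1: "represents_mod8 (U (2 * k\<^sub>1)) (U (2 * k\<^sub>1 + 1)) (target (J k\<^sub>1))"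
    using J k(1) by simp
  obtain Z\<^sub>1 Z\<^sub>2 where Z12: "Z\<^sub>1 dvd 1" "Z\<^sub>2 dvd 1"
    "2 ^ 3 dvd U (2 * k\<^sub>1) * Z\<^sub>1 ^ (2 * m) + U (2 * k\<^sub>1 + 1) * Z\<^sub>2 ^ (2 * m) - target (J k\<^sub>1)"
    using represents_mod8_by_powers[OF rep\<^sub>1 m] by (elim exE conjE) (rule that)
  have rep\<^sub>2: "represents_mod8 (U (2 * k\<^sub>2)) (U (2 * k\<^sub>2 + 1)) (- target (J k\<^sub>1))"
    using J k(2,4) by simp
  obtain Z\<^sub>3 Z\<^sub>4 where Z34: "Z\<^sub>3 dvd 1" "Z\<^sub>4 dvd 1"
    "2 ^ 3 dvd U (2 * k\<^sub>2) * Z\<^sub>3 ^ (2 * m) + U (2 * k\<^sub>2 + 1) * Z\<^sub>4 ^ (2 * m) - - target (J k\<^sub>1)"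
    using represents_mod8_by_powers[OF rep\<^sub>2 m] by (elim exE conjE) (rule that)
  define q where "q = (!) [2 * k\<^sub>1, 2 * k\<^sub>1 + 1, 2 * k\<^sub>2, 2 * k\<^sub>2 + 1]"
  define Z where "Z = (!) [Z\<^sub>1, Z\<^sub>2, Z\<^sub>3, Z\<^sub>4]"
  have less4: "i < 4 \<longleftrightarrow> i = 0 \<or> i = 1 \<or> i = 2 \<or> i = (3::nat)" for i by auto
  have "inj_on q {..<4}" unfolding q_def using k(3) by (intro inj_on_nth) auto
  moreover have "q ` {..<4} \<subseteq> {..<6}" using k(1,2) by (auto simp: q_def less4)
  moreover have "\<forall>i<4. Z i dvd 1" using Z12 Z34 by (auto simp: Z_def less4)
  moreover have "(\<Sum>i<4. U (q i) * Z i ^ (2 * m))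
      = (U (2 * k\<^sub>1) * Z\<^sub>1 ^ (2 * m) + U (2 * k\<^sub>1 + 1) * Z\<^sub>2 ^ (2 * m) - target (J k\<^sub>1))
      + (U (2 * k\<^sub>2) * Z\<^sub>3 ^ (2 * m) + U (2 * k\<^sub>2 + 1) * Z\<^sub>4 ^ (2 * m) - - target (J k\<^sub>1))"
    by (simp add: q_def Z_def eval_nat_numeral)
  then have "2 ^ 3 dvd (\<Sum>i<4. U (q i) * Z i ^ (2 * m))"
    using Z12(3) Z34(3) by (simp only: dvd_add)
  ultimately show ?thesis by blast
qed

lemma paired_units_zero:
  fixes U :: "nat \<Rightarrow> 'a::ramified_disc zsqrt"
  assumes units: "\<forall>k<6. U k dvd 1" and pairs: "\<forall>k<3. 2 dvd U (2 * k) - U (2 * k + 1)" and m: "odd m"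
  shows "\<exists>q Z. inj_on q {..<4::nat} \<and> q ` {..<4} \<subseteq> {..<6} \<and> Z 0 dvd 1 \<and>
    (\<Sum>i<4. U (q i) * Z i ^ (2 * m)) = 0"
proof -
  have split: "(\<Sum>i<4. g i) = (\<Sum>i<3. g i) + g 3" for g :: "nat \<Rightarrow> 'a zsqrt"
    by (simp add: eval_nat_numeral)
  obtain q :: "nat \<Rightarrow> nat" and Z where q: "inj_on q {..<4}" "q ` {..<4} \<subseteq> {..<6}"
    and Z: "\<forall>i<4. Z i dvd 1" and sum: "2 ^ 3 dvd (\<Sum>i<3. U (q i) * Z i ^ (2 * m)) + U (q 3) * Z 3 ^ (2 * m)"
    using paired_units_sum_mod8[OF units pairs m] unfolding split by blast
  have "3 \<in> {..<4::nat}" by simp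
  then have "q 3 < 6" using q(2) by blast
  then have "U (q 3) dvd 1" "Z 3 dvd 1" using units Z by simp_all
  then obtain Y where Y: "(\<Sum>i<3. U (q i) * Z i ^ (2 * m)) + U (q 3) * Y ^ (2 * m) = 0"
    using hensel_lift_zero[OF _ _ m sum] by blast
  have "(\<Sum>i<4. U (q i) * (Z(3 := Y)) i ^ (2 * m)) = 0"
    unfolding split using Y by simp
  moreover have "(Z(3 := Y)) 0 dvd 1" using Z by simp
  ultimately show ?thesis using q by blast
qed

lemma common_exponent:
  fixes r :: "nat \<Rightarrow> nat"
  assumes "0 < d" "\<forall>k<n. r k mod d = c"
  shows "\<exists>R t. \<forall>k<n. r k + t k * d = R"
proof -
  define R where "R = c + d * (\<Sum>k<n. r k)"
  have "r k + ((R - r k) div d) * d = R" if "k < n" for k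
  proof -
    have "r k \<le> (\<Sum>k<n. r k)" using that by (intro member_le_sum) auto
    also have "\<dots> \<le> d * (\<Sum>k<n. r k)" using assms(1) by simp
    finally have "r k \<le> R" by (simp add: R_def)
    moreover have "c = r k mod d" using assms(2) that by simp
    then have "R mod d = r k mod d" by (simp add: R_def)
    ultimately have "d dvd R - r k" using mod_eq_dvd_iff_nat by blast
    then show ?thesis using \<open>r k \<le> R\<close> by simp
  qed
  then show ?thesis by (intro exI[of _ R] exI[of _ "\<lambda>k. (R - r k) div d"]) simp
qed

lemma pi_power_monomial_rescale:
  assumes "r + t * d = R"
  shows "((\<pi> :: 'a::ramified_disc zsqrt) ^ r * U) * (\<pi> ^ t * Z) ^ d = \<pi> ^ R * (U * Z ^ d)"
  unfolding assms[symmetric] power_add power_mult_distrib power_mult by (simp add: algebra_simps)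

lemma diag_zero_from_common_level:
  fixes A U Z :: "nat \<Rightarrow> 'a::ramified_disc zsqrt" and p r :: "nat \<Rightarrow> nat"
  assumes d: "0 < d" and p: "inj_on p {..<n}" "p ` {..<n} \<subseteq> {..<s}"
    and A: "\<forall>k<n. A (p k) = \<pi> ^ r k * U k" and level: "\<forall>k<n. r k mod d = c"
    and Z: "(\<Sum>k<n. U k * Z k ^ d) = 0" "k\<^sub>0 < n" "Z k\<^sub>0 \<noteq> 0"
  shows "\<exists>X. (\<exists>i<s. X i \<noteq> 0) \<and> (\<Sum>i<s. A i * X i ^ d) = 0"
proof -
  obtain R t where Rt: "\<forall>k<n. r k + t k * d = R" using common_exponent[OF d level] by blast
  define X where "X i = (if i \<in> p ` {..<n} then \<pi> ^ t (the_inv_into {..<n} p i) * Z (the_inv_into {..<n} p i)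
    else 0)" for i
  have Xp: "X (p k) = \<pi> ^ t k * Z k" if "k < n" for k
    using p(1) that by (simp add: X_def the_inv_into_f_f)
  have "(\<Sum>i<s. A i * X i ^ d) = (\<Sum>i\<in>p ` {..<n}. A i * X i ^ d)"
    by (rule sum.mono_neutral_right) (use p(2) d in \<open>auto simp: X_def power_0_left\<close>)
  also have "\<dots> = (\<Sum>k<n. A (p k) * X (p k) ^ d)"
    using sum.reindex[OF p(1)] by simp
  also have "\<dots> = (\<Sum>k<n. \<pi> ^ R * (U k * Z k ^ d))"
  proof (rule sum.cong)
    fix k assume "k \<in> {..<n}"
    then show "A (p k) * X (p k) ^ d = \<pi> ^ R * (U k * Z k ^ d)"
      using A Xp pi_power_monomial_rescale[OF Rt[rule_format, of k]] by simp
  qed simp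
  also have "\<dots> = 0" using Z(1) by (simp flip: sum_distrib_left)
  finally have "(\<Sum>i<s. A i * X i ^ d) = 0" .
  moreover have "X (p k\<^sub>0) \<noteq> 0"
    using Xp[OF Z(2)] Z(3) pi_power_mult_cancel[of "t k\<^sub>0" "Z k\<^sub>0" 0] by auto
  moreover have "p k\<^sub>0 < s" using p(2) Z(2) by auto
  ultimately show ?thesis by blast
qed

lemma diag_zero_of_three_pairs:
  fixes A U :: "nat \<Rightarrow> 'a::ramified_disc zsqrt" and v r :: "nat \<Rightarrow> nat"
  assumes m: "odd m" and v: "inj_on v {..<6}" "v ` {..<6} \<subseteq> {..<s}"
    and A: "\<forall>k<6. A (v k) = \<pi> ^ r k * U k" and units: "\<forall>k<6. U k dvd 1"
    and level: "\<forall>k<6. r k mod (2 * m) = c" and pairs: "\<forall>k<3. 2 dvd U (2 * k) - U (2 * k + 1)"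
  shows "\<exists>X. (\<exists>i<s. X i \<noteq> 0) \<and> (\<Sum>i<s. A i * X i ^ (2 * m)) = 0"
proof -
  obtain q :: "nat \<Rightarrow> nat" and Z where q: "inj_on q {..<4}" "q ` {..<4} \<subseteq> {..<6}"
    and Z: "Z 0 dvd 1" "(\<Sum>i<4. U (q i) * Z i ^ (2 * m)) = 0"
    using paired_units_zero[OF units pairs m] by blast
  show ?thesis
  proof (rule diag_zero_from_common_level[where p = "v \<circ> q" and r = "r \<circ> q" and U = "U \<circ> q"
        and Z = Z and n = 4 and k\<^sub>0 = 0])
    show "0 < 2 * m" using m by (cases m) auto
    show "inj_on (v \<circ> q) {..<4}" using q inj_on_subset[OF v(1)] by (intro comp_inj_on) auto
    show "(v \<circ> q) ` {..<4} \<subseteq> {..<s}" using q(2) v(2) by (auto simp: image_subset_iff)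
    show "\<forall>k<4. A ((v \<circ> q) k) = \<pi> ^ (r \<circ> q) k * (U \<circ> q) k" using A q(2) by auto
    show "\<forall>k<4. (r \<circ> q) k mod (2 * m) = c" using level q(2) by auto
    show "(\<Sum>k<4. (U \<circ> q) k * Z k ^ (2 * m)) = 0" using Z(2) by simp
    show "Z 0 \<noteq> 0" using Z(1) by auto
  qed simp
qed

section \<open>Valuations and \<open>\<pi>\<close>-adic digits of encoded elements\<close>

abbreviation of_oelt :: "oelt \<Rightarrow> 'a::ramified_disc zsqrt" where
  "of_oelt \<equiv> Abs_zsqrt"

lemma of_oelt_inject: "(of_oelt x :: 'a::ramified_disc zsqrt) = of_oelt y \<longleftrightarrow> x = y"
  by (simp add: Abs_zsqrt_inject)

lemma parts_of_oelt: "rat_part (of_oelt x) = fst x" "sqrt_part (of_oelt x) = snd x"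
  by (simp_all add: rat_part_def sqrt_part_def Abs_zsqrt_inverse)

lemma of_oelt_ops:
  "(of_oelt o_zero :: 'a::ramified_disc zsqrt) = 0"
  "(of_oelt o_one :: 'a zsqrt) = 1"
  "(of_oelt (o_add x y) :: 'a zsqrt) = of_oelt x + of_oelt y"
  "(of_oelt (o_sub x y) :: 'a zsqrt) = of_oelt x - of_oelt y"
  "(of_oelt (o_mul (disc TYPE('a)) x y) :: 'a zsqrt) = of_oelt x * of_oelt y"
  by (simp_all add: zsqrt_eq_iff parts_of_oelt o_zero_def o_one_def o_add_def o_sub_def o_mul_def
      z2_of_int_eq_of_int z2_ops_eq_ring_ops)

lemma of_oelt_o_pow: "(of_oelt (o_pow (disc TYPE('a)) x n) :: 'a::ramified_disc zsqrt) = of_oelt x ^ n"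
  by (induction n) (simp_all add: of_oelt_ops)

lemma of_oelt_o_pi: "(of_oelt (o_pi (disc TYPE('a))) :: 'a::ramified_disc zsqrt) = \<pi>"
proof -
  have "disc TYPE('a) \<in> {-1, -5} \<longleftrightarrow> odd (disc TYPE('a))" using disc_cases[where 'a='a] by auto
  then show ?thesis by (simp add: o_pi_def \<pi>_def Zsqrt_def z2_of_int_eq_of_int)
qed

lemma ex_o_mul_eq_iff:
  "(\<exists>v. o_mul (disc TYPE('a)) u v = w) \<longleftrightarrow> (\<exists>V. (of_oelt u :: 'a::ramified_disc zsqrt) * V = of_oelt w)"
proof
  assume "\<exists>v. o_mul (disc TYPE('a)) u v = w"
  then obtain v where "o_mul (disc TYPE('a)) u v = w" ..
  then have "(of_oelt u :: 'a zsqrt) * of_oelt v = of_oelt w" by (simp only: of_oelt_ops(5)[symmetric])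
  then show "\<exists>V. (of_oelt u :: 'a zsqrt) * V = of_oelt w" ..
next
  assume "\<exists>V. (of_oelt u :: 'a zsqrt) * V = of_oelt w"
  then obtain V where "(of_oelt u :: 'a zsqrt) * V = of_oelt w" ..
  then have "(of_oelt u :: 'a zsqrt) * of_oelt (Rep_zsqrt V) = of_oelt w"
    by (simp add: Rep_zsqrt_inverse)
  then have "o_mul (disc TYPE('a)) u (Rep_zsqrt V) = w"
    by (simp only: of_oelt_ops(5)[symmetric] of_oelt_inject)
  then show "\<exists>v. o_mul (disc TYPE('a)) u v = w" ..
qed

lemma o_unit_iff: "o_unit (disc TYPE('a)) u \<longleftrightarrow> (of_oelt u :: 'a::ramified_disc zsqrt) dvd 1"
  unfolding o_unit_def ex_o_mul_eq_iff of_oelt_ops by (simp add: dvd_def eq_commute[of 1])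

lemma o_dvd_iff: "o_dvd (disc TYPE('a)) x y \<longleftrightarrow> (of_oelt x :: 'a::ramified_disc zsqrt) dvd of_oelt y"
  unfolding o_dvd_def dvd_def eq_commute[of y] eq_commute[of "of_oelt y"] ex_o_mul_eq_iff ..

lemma o_val_o_upart:
  assumes "a \<noteq> o_zero"
  shows "(of_oelt (o_upart (disc TYPE('a)) a) :: 'a::ramified_disc zsqrt) dvd 1
    \<and> (of_oelt a :: 'a zsqrt) = \<pi> ^ o_val (disc TYPE('a)) a * of_oelt (o_upart (disc TYPE('a)) a)"
proof -
  let ?D = "disc TYPE('a)"
  let ?P = "\<lambda>r u. o_unit ?D u \<and> a = o_mul ?D (o_pow ?D (o_pi ?D) r) u"
  have "(of_oelt a :: 'a zsqrt) \<noteq> 0"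
    unfolding of_oelt_ops(1)[symmetric] of_oelt_inject using assms .
  then obtain r U where U: "U dvd 1" "(of_oelt a :: 'a zsqrt) = \<pi> ^ r * U"
    using pi_power_times_unit_exists by blast
  have unique: "r' = r \<and> of_oelt u = U" if "?P r' u" for r' u
  proof -
    have u: "(of_oelt u :: 'a zsqrt) dvd 1" and a: "(of_oelt a :: 'a zsqrt) = \<pi> ^ r' * of_oelt u"
      using that by (simp_all add: o_unit_iff of_oelt_ops of_oelt_o_pow of_oelt_o_pi)
    have "\<pi> ^ r' * of_oelt u = \<pi> ^ r * U" using a U(2) by simp
    from pi_power_times_unit_unique[OF u U(1) this] show ?thesis by simp
  qed
  have P: "?P r (Rep_zsqrt U)"
  proof
    show "o_unit ?D (Rep_zsqrt U)" using U(1) by (simp add: o_unit_iff Rep_zsqrt_inverse)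
    have "(of_oelt (o_mul ?D (o_pow ?D (o_pi ?D) r) (Rep_zsqrt U)) :: 'a zsqrt) = of_oelt a"
      by (simp add: of_oelt_ops of_oelt_o_pow of_oelt_o_pi Rep_zsqrt_inverse U(2))
    then show "a = o_mul ?D (o_pow ?D (o_pi ?D) r) (Rep_zsqrt U)" by (simp only: of_oelt_inject)
  qed
  have "o_val ?D a = r"
    unfolding o_val_def
  proof (rule the_equality)
    show "\<exists>u. ?P r u" using P ..
    show "r' = r" if "\<exists>u. ?P r' u" for r' using that unique by blast
  qed
  moreover have "o_upart ?D a = Rep_zsqrt U"
    unfolding o_upart_def \<open>o_val ?D a = r\<close>
  proof (rule the_equality)
    show "?P r (Rep_zsqrt U)" by (fact P)
    fix u assume "?P r u"
    then have "(of_oelt u :: 'a zsqrt) = U" using unique by blast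
    then have "Rep_zsqrt (of_oelt u :: 'a zsqrt) = Rep_zsqrt U" by (rule arg_cong)
    then show "u = Rep_zsqrt U" by (simp add: Abs_zsqrt_inverse)
  qed
  ultimately show ?thesis using U by (simp add: Rep_zsqrt_inverse)
qed

definition digit_sum :: "(nat \<Rightarrow> nat) \<Rightarrow> nat \<Rightarrow> 'a::ramified_disc zsqrt" where
  "digit_sum c n = (\<Sum>j<n. if c j = 1 then \<pi> ^ j else 0)"

lemma of_oelt_pi_psum: "(of_oelt (pi_psum (disc TYPE('a)) c n) :: 'a::ramified_disc zsqrt) = digit_sum c n"
  by (induction n) (auto simp: digit_sum_def of_oelt_ops of_oelt_o_pow of_oelt_o_pi)

lemma pi_psum_expansion_iff:
  "(\<forall>n. o_dvd (disc TYPE('a)) (o_pow (disc TYPE('a)) (o_pi (disc TYPE('a))) n) (o_sub u (pi_psum (disc TYPE('a)) c n)))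
   \<longleftrightarrow> (\<forall>n. (\<pi> :: 'a::ramified_disc zsqrt) ^ n dvd of_oelt u - digit_sum c n)"
  by (simp add: o_dvd_iff of_oelt_ops of_oelt_o_pow of_oelt_o_pi of_oelt_pi_psum)

lemma pi_digit_expansion:
  assumes U: "(U :: 'a::ramified_disc zsqrt) dvd 1"
  shows "\<exists>c. (\<forall>j. c j \<le> 1) \<and> c 0 = 1 \<and> (\<forall>n. \<pi> ^ n dvd U - digit_sum c n)"
proof -
  have "\<forall>x. \<exists>p. (fst p = 0 \<or> fst p = 1) \<and> (x :: 'a zsqrt) = of_int (fst p) + \<pi> * snd p"
    by (simp only: split_paired_Ex fst_conv snd_conv) (use pi_digit_decomposition in blast)
  from choice[OF this] obtain f where f: "\<forall>x. (fst (f x) = 0 \<or> fst (f x) = 1)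
    \<and> (x :: 'a zsqrt) = of_int (fst (f x)) + \<pi> * snd (f x)" ..
  define y where "y n = ((snd \<circ> f) ^^ n) U" for n
  define c where "c n = nat (fst (f (y n)))" for n
  have digit01: "fst (f x) = 0 \<or> fst (f x) = 1" for x using f by blast
  have digit: "of_int (fst (f (y n))) = (if c n = 1 then 1 else (0 :: 'a zsqrt))" for n
    using digit01[of "y n"] by (auto simp: c_def)
  have y_Suc: "y (Suc n) = snd (f (y n))" for n by (simp add: y_def)
  have U_eq: "U = digit_sum c n + \<pi> ^ n * y n" for n
  proof (induction n)
    case (Suc n)
    have "y n = of_int (fst (f (y n))) + \<pi> * snd (f (y n))" using f by blast
    then have "\<pi> ^ n * y n = \<pi> ^ n * (of_int (fst (f (y n))) + \<pi> * snd (f (y n)))" by (rule arg_cong)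
    also have "\<dots> = (if c n = 1 then \<pi> ^ n else 0) + \<pi> ^ Suc n * y (Suc n)"
      by (simp add: digit y_Suc algebra_simps)
    finally show ?case using Suc by (simp add: digit_sum_def add.assoc)
  qed (simp add: digit_sum_def y_def)
  have "c j \<le> 1" for j using digit01[of "y j"] by (auto simp: c_def)
  moreover have "c 0 = 1"
  proof (rule ccontr)
    assume "c 0 \<noteq> 1"
    then have "fst (f U) = 0" using digit01[of U] by (auto simp: c_def y_def)
    moreover have "U = of_int (fst (f U)) + \<pi> * snd (f U)" using f by blast
    ultimately have "U = \<pi> * snd (f U)" by simp
    then have "\<pi> dvd U" by (rule dvdI)
    then show False using U pi_dvd_imp_not_unit by blast
  qed
  moreover have "\<pi> ^ n dvd U - digit_sum c n" for n
    using U_eq[of n] by (simp add: algebra_simps)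
  ultimately show ?thesis by blast
qed

lemma second_digit_unique:
  assumes "\<forall>j. c j \<le> 1" "c 0 = 1" "(\<pi> :: 'a::ramified_disc zsqrt) ^ 2 dvd U - digit_sum c 2"
    and "\<forall>j. c' j \<le> 1" "c' 0 = 1" "(\<pi> :: 'a zsqrt) ^ 2 dvd U - digit_sum c' 2"
  shows "c 1 = c' 1"
proof (rule ccontr)
  assume "c 1 \<noteq> c' 1"
  with assms(2,5) assms(1,4)[rule_format, of 1]
  have "digit_sum c 2 - digit_sum c' 2 = \<pi> \<or> digit_sum c 2 - digit_sum c' 2 = - (\<pi> :: 'a zsqrt)"
    by (auto simp: digit_sum_def numeral_2_eq_2 le_Suc_eq)
  moreover have "(\<pi> :: 'a zsqrt) ^ 2 dvd digit_sum c 2 - digit_sum c' 2"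
    using dvd_diff[OF assms(6) assms(3)] by (simp add: algebra_simps)
  ultimately have "(\<pi> :: 'a zsqrt) ^ 2 dvd \<pi>" by (metis dvd_minus_iff)
  then obtain z where "\<pi> = \<pi> ^ 2 * (z :: 'a zsqrt)" by (rule dvdE)
  then have "\<pi> * 1 = \<pi> * (\<pi> * z)" by (simp add: power2_eq_square mult.assoc)
  then have "1 = \<pi> * z" by (rule pi_mult_cancel)
  then have "\<pi> dvd (1 :: 'a zsqrt)" by (rule dvdI)
  then show False using pi_not_unit by blast
qed

lemma pi_coeff_eq_second_digit:
  assumes "(of_oelt u :: 'a::ramified_disc zsqrt) dvd 1"
  shows "\<exists>c. (\<forall>j. c j \<le> 1) \<and> c 0 = 1 \<and> pi_coeff (disc TYPE('a)) u = c 1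
    \<and> (\<pi> :: 'a zsqrt) ^ 2 dvd of_oelt u - digit_sum c 2"
proof -
  obtain c where c: "\<forall>j. c j \<le> 1" "c 0 = 1" "\<forall>n. (\<pi> :: 'a zsqrt) ^ n dvd of_oelt u - digit_sum c n"
    using pi_digit_expansion[OF assms] by blast
  have "pi_coeff (disc TYPE('a)) u = c 1"
    unfolding pi_coeff_def pi_psum_expansion_iff[where 'a='a]
  proof (rule the_equality)
    show "\<exists>c'. (\<forall>j. c' j \<le> 1) \<and> c' 0 = 1 \<and> c' 1 = c 1 \<and> (\<forall>n. (\<pi> :: 'a zsqrt) ^ n dvd of_oelt u - digit_sum c' n)"
      using c by blast
    fix c\<^sub>1 assume "\<exists>c'. (\<forall>j. c' j \<le> 1) \<and> c' 0 = 1 \<and> c' 1 = c\<^sub>1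
      \<and> (\<forall>n. (\<pi> :: 'a zsqrt) ^ n dvd of_oelt u - digit_sum c' n)"
    then obtain c' where c': "\<forall>j. c' j \<le> 1" "c' 0 = 1" "c' 1 = c\<^sub>1"
      "\<forall>n. (\<pi> :: 'a zsqrt) ^ n dvd of_oelt u - digit_sum c' n" by blast
    show "c\<^sub>1 = c 1"
      using second_digit_unique[OF c'(1,2) c'(4)[rule_format, of 2] c(1,2) c(3)[rule_format, of 2]] c'(3)
      by simp
  qed
  then show ?thesis using c by blast
qed

lemma pi_coeff_le_1: "(of_oelt u :: 'a::ramified_disc zsqrt) dvd 1 \<Longrightarrow> pi_coeff (disc TYPE('a)) u \<le> 1"
  using pi_coeff_eq_second_digit[of u, where 'a='a] by auto

lemma two_dvd_diff_if_pi_coeff_eq: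
  assumes "(of_oelt u :: 'a::ramified_disc zsqrt) dvd 1" "(of_oelt u' :: 'a zsqrt) dvd 1"
    and "pi_coeff (disc TYPE('a)) u = pi_coeff (disc TYPE('a)) u'"
  shows "2 dvd (of_oelt u - of_oelt u' :: 'a zsqrt)"
proof -
  obtain c c' where c: "c 0 = 1" "pi_coeff (disc TYPE('a)) u = c 1" "(\<pi> :: 'a zsqrt) ^ 2 dvd of_oelt u - digit_sum c 2"
    and c': "c' 0 = 1" "pi_coeff (disc TYPE('a)) u' = c' 1" "(\<pi> :: 'a zsqrt) ^ 2 dvd of_oelt u' - digit_sum c' 2"
    using pi_coeff_eq_second_digit[OF assms(1)] pi_coeff_eq_second_digit[OF assms(2)] by blast
  have "digit_sum c 2 = (digit_sum c' 2 :: 'a zsqrt)"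
    using c c' assms(3) by (simp add: digit_sum_def numeral_2_eq_2)
  then have "(\<pi> :: 'a zsqrt) ^ 2 dvd of_oelt u - of_oelt u'"
    using dvd_diff[OF c(3) c'(3)] by simp
  moreover obtain e :: "'a zsqrt" where "\<pi> ^ 2 = 2 * e" using pi_square_eq by blast
  ultimately have "2 * e dvd of_oelt u - of_oelt u'" by simp
  then show ?thesis by (rule dvd_mult_left)
qed

lemma of_oelt_diag_form:
  "(of_oelt (diag_form (disc TYPE('a)) d a x n) :: 'a::ramified_disc zsqrt) = (\<Sum>i<n. of_oelt (a i) * of_oelt (x i) ^ d)"
  by (induction n) (simp_all add: of_oelt_ops of_oelt_o_pow)

lemma has_nontrivial_zero_if_zsqrt_zero:
  assumes "\<exists>X. (\<exists>i<s. X i \<noteq> 0) \<and> (\<Sum>i<s. (of_oelt (a i) :: 'a::ramified_disc zsqrt) * X i ^ d) = 0"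
  shows "has_nontrivial_zero (disc TYPE('a)) d s a"
proof -
  obtain X :: "nat \<Rightarrow> 'a zsqrt" where X: "\<exists>i<s. X i \<noteq> 0" "(\<Sum>i<s. of_oelt (a i) * X i ^ d) = 0"
    using assms by blast
  obtain i where i: "i < s" "X i \<noteq> 0" using X(1) by blast
  have "Rep_zsqrt (X i) \<noteq> o_zero"
  proof
    assume "Rep_zsqrt (X i) = o_zero"
    then have "X i = of_oelt o_zero" by (metis Rep_zsqrt_inverse)
    then show False using i(2) by (simp add: of_oelt_ops)
  qed
  then have "\<exists>i<s. Rep_zsqrt (X i) \<noteq> o_zero" using i(1) by blast
  moreover have "(of_oelt (diag_form (disc TYPE('a)) d a (\<lambda>i. Rep_zsqrt (X i)) s) :: 'a zsqrt) = of_oelt o_zero"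
    using X(2) by (simp add: of_oelt_diag_form Rep_zsqrt_inverse of_oelt_ops)
  then have "diag_form (disc TYPE('a)) d a (\<lambda>i. Rep_zsqrt (X i)) s = o_zero"
    by (simp only: of_oelt_inject)
  ultimately show ?thesis
    unfolding has_nontrivial_zero_def by (intro exI[of _ "\<lambda>i. Rep_zsqrt (X i)"]) simp
qed

section \<open>Variables at a common level\<close>

lemma six_paired_level_variables_zero:
  fixes a :: "nat \<Rightarrow> oelt" and v :: "nat \<Rightarrow> nat"
  assumes m: "odd m" and nz: "\<forall>i<s. a i \<noteq> o_zero"
    and v: "inj_on v {..<6}" "\<forall>k<6. v k < s"
    and level: "\<forall>k<6. level (disc TYPE('a::ramified_disc)) (2 * m) (a (v k))
      = level (disc TYPE('a)) (2 * m) (a (v 0))"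
    and pairs: "\<forall>k<3. var_pi_coeff (disc TYPE('a)) (a (v (2 * k)))
      = var_pi_coeff (disc TYPE('a)) (a (v (2 * k + 1)))"
  shows "has_nontrivial_zero (disc TYPE('a)) (2 * m) s a"
proof -
  let ?D = "disc TYPE('a)"
  define U where "U k = (of_oelt (o_upart ?D (a (v k))) :: 'a zsqrt)" for k
  have dec: "U k dvd 1" "of_oelt (a (v k)) = \<pi> ^ o_val ?D (a (v k)) * U k" if "k < 6" for k
  proof -
    have "a (v k) \<noteq> o_zero" using nz v(2) that by simp
    from o_val_o_upart[where 'a='a, OF this]
    show "U k dvd 1" "of_oelt (a (v k)) = \<pi> ^ o_val ?D (a (v k)) * U k" unfolding U_def by blast+
  qed
  have "\<exists>X. (\<exists>i<s. X i \<noteq> 0) \<and> (\<Sum>i<s. (of_oelt (a i) :: 'a zsqrt) * X i ^ (2 * m)) = 0"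
  proof (rule diag_zero_of_three_pairs[OF m v(1)])
    show "v ` {..<6} \<subseteq> {..<s}" using v(2) by auto
    show "\<forall>k<6. of_oelt (a (v k)) = \<pi> ^ o_val ?D (a (v k)) * U k" "\<forall>k<6. U k dvd 1"
      using dec by simp_all
    show "\<forall>k<6. o_val ?D (a (v k)) mod (2 * m) = level ?D (2 * m) (a (v 0))"
      using level unfolding level_def by blast
    show "\<forall>k<3. 2 dvd U (2 * k) - U (2 * k + 1)"
    proof (intro allI impI)
      fix k :: nat assume "k < 3"
      then have "U (2 * k) dvd 1" "U (2 * k + 1) dvd 1" using dec(1) by simp_all
      moreover have "pi_coeff ?D (o_upart ?D (a (v (2 * k)))) = pi_coeff ?D (o_upart ?D (a (v (2 * k + 1))))"
        using pairs \<open>k < 3\<close> by (simp add: var_pi_coeff_def)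
      ultimately show "2 dvd U (2 * k) - U (2 * k + 1)"
        unfolding U_def by (rule two_dvd_diff_if_pi_coeff_eq)
    qed
  qed
  then show ?thesis by (rule has_nontrivial_zero_if_zsqrt_zero)
qed

lemma seven_level_variables_paired:
  fixes a :: "nat \<Rightarrow> oelt"
  assumes nz: "\<forall>i<s. a i \<noteq> o_zero" and I: "I \<subseteq> {..<s}" "card I = 7"
    and level: "\<forall>i\<in>I. \<forall>j\<in>I. level (disc TYPE('a::ramified_disc)) d (a i) = level (disc TYPE('a)) d (a j)"
  shows "\<exists>v :: nat \<Rightarrow> nat. inj_on v {..<6} \<and> (\<forall>k<6. v k < s) \<and>
    (\<forall>k<6. level (disc TYPE('a)) d (a (v k)) = level (disc TYPE('a)) d (a (v 0))) \<and>
    (\<forall>k<3. var_pi_coeff (disc TYPE('a)) (a (v (2 * k))) = var_pi_coeff (disc TYPE('a)) (a (v (2 * k + 1))))"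
proof -
  let ?D = "disc TYPE('a)"
  have "var_pi_coeff ?D (a i) \<in> {0, 1}" if "i \<in> I" for i
  proof -
    have "a i \<noteq> o_zero" using nz I(1) that by auto
    from o_val_o_upart[where 'a='a, OF this] have "(of_oelt (o_upart ?D (a i)) :: 'a zsqrt) dvd 1" by blast
    then have "var_pi_coeff ?D (a i) \<le> 1" unfolding var_pi_coeff_def by (rule pi_coeff_le_1)
    then show ?thesis by auto
  qed
  then have "(\<lambda>i. var_pi_coeff ?D (a i)) ` I \<subseteq> {0, 1}" by (rule image_subsetI)
  moreover have "finite I" using I(1) finite_subset by blast
  ultimately have "\<exists>v :: nat \<Rightarrow> nat. inj_on v {..<6} \<and> v ` {..<6} \<subseteq> I
      \<and> (\<forall>k<3. var_pi_coeff ?D (a (v (2 * k))) = var_pi_coeff ?D (a (v (2 * k + 1))))"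
    using two_valued_disjoint_pairs[of I 3 "\<lambda>i. var_pi_coeff ?D (a i)" 0 1] I(2) by simp
  then obtain v :: "nat \<Rightarrow> nat" where v: "inj_on v {..<6}" "v ` {..<6} \<subseteq> I"
    "\<forall>k<3. var_pi_coeff ?D (a (v (2 * k))) = var_pi_coeff ?D (a (v (2 * k + 1)))"
    by blast
  have vI: "v k \<in> I" if "k < 6" for k using v(2) that by blast
  have "\<forall>k<6. v k < s" using vI I(1) by blast
  moreover have "\<forall>k<6. level ?D d (a (v k)) = level ?D d (a (v 0))"
    using vI[of 0] vI level by simp
  ultimately show ?thesis using v(1,3) by blast
qed

theorem diagonal_form_zero:
  fixes m d s :: nat and a :: "nat \<Rightarrow> oelt"
  assumes D: "D = disc TYPE('a::ramified_disc)" and d: "d = 2 * m" and m: "odd m"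
    and nz: "\<forall>i<s. a i \<noteq> o_zero"
  shows "((\<exists>v :: nat \<Rightarrow> nat. inj_on v {..<6} \<and> (\<forall>k<6. v k < s) \<and>
            (\<forall>k<6. level D d (a (v k)) = level D d (a (v 0))) \<and>
            (\<forall>k<3. var_pi_coeff D (a (v (2*k))) = var_pi_coeff D (a (v (2*k+1)))))
          \<longrightarrow> has_nontrivial_zero D d s a)
       \<and> ((\<exists>I. I \<subseteq> {..<s} \<and> card I = 7 \<and>
            (\<forall>i\<in>I. \<forall>j\<in>I. level D d (a i) = level D d (a j)))
          \<longrightarrow> has_nontrivial_zero D d s a)"
  unfolding D d
proof (intro conjI impI)
  assume "\<exists>v :: nat \<Rightarrow> nat. inj_on v {..<6} \<and> (\<forall>k<6. v k < s) \<and>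
    (\<forall>k<6. level (disc TYPE('a)) (2 * m) (a (v k)) = level (disc TYPE('a)) (2 * m) (a (v 0))) \<and>
    (\<forall>k<3. var_pi_coeff (disc TYPE('a)) (a (v (2*k))) = var_pi_coeff (disc TYPE('a)) (a (v (2*k+1))))"
  then show "has_nontrivial_zero (disc TYPE('a)) (2 * m) s a"
    using six_paired_level_variables_zero[OF m nz] by blast
next
  assume "\<exists>I. I \<subseteq> {..<s} \<and> card I = 7 \<and>
    (\<forall>i\<in>I. \<forall>j\<in>I. level (disc TYPE('a)) (2 * m) (a i) = level (disc TYPE('a)) (2 * m) (a j))"
  then obtain I where "I \<subseteq> {..<s}" "card I = 7"
    "\<forall>i\<in>I. \<forall>j\<in>I. level (disc TYPE('a)) (2 * m) (a i) = level (disc TYPE('a)) (2 * m) (a j)"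
    by blast
  from seven_level_variables_paired[OF nz this] obtain v :: "nat \<Rightarrow> nat" where "inj_on v {..<6}"
    "\<forall>k<6. v k < s" "\<forall>k<6. level (disc TYPE('a)) (2 * m) (a (v k)) = level (disc TYPE('a)) (2 * m) (a (v 0))"
    "\<forall>k<3. var_pi_coeff (disc TYPE('a)) (a (v (2 * k))) = var_pi_coeff (disc TYPE('a)) (a (v (2 * k + 1)))"
    by blast
  then show "has_nontrivial_zero (disc TYPE('a)) (2 * m) s a"
    by (rule six_paired_level_variables_zero[OF m nz])
qed

datatype disc_2 = Disc_2
datatype disc_minus_2 = Disc_minus_2
datatype disc_10 = Disc_10
datatype disc_minus_10 = Disc_minus_10
datatype disc_minus_1 = Disc_minus_1
datatype disc_minus_5 = Disc_minus_5

instantiation disc_2 :: ramified_disc begin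
definition "disc (_ :: disc_2 itself) = 2"
instance by standard (simp add: disc_disc_2_def)
end

instantiation disc_minus_2 :: ramified_disc begin
definition "disc (_ :: disc_minus_2 itself) = -2"
instance by standard (simp add: disc_disc_minus_2_def)
end

instantiation disc_10 :: ramified_disc begin
definition "disc (_ :: disc_10 itself) = 10"
instance by standard (simp add: disc_disc_10_def)
end

instantiation disc_minus_10 :: ramified_disc begin
definition "disc (_ :: disc_minus_10 itself) = -10"
instance by standard (simp add: disc_disc_minus_10_def)
end

instantiation disc_minus_1 :: ramified_disc begin
definition "disc (_ :: disc_minus_1 itself) = -1"
instance by standard (simp add: disc_disc_minus_1_def)
end

instantiation disc_minus_5 :: ramified_disc begin
definition "disc (_ :: disc_minus_5 itself) = -5"
instance by standard (simp add: disc_disc_minus_5_def)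
end

theorem lemma9:
  fixes D :: int and m d s :: nat and a :: "nat \<Rightarrow> oelt"
  assumes "D \<in> {2, -2, 10, -10, -1, -5}"
    and "d = 2 * m" and "odd m" and "m \<ge> 3"
    and "\<forall>i<s. a i \<noteq> o_zero"
  shows "((\<exists>v :: nat \<Rightarrow> nat. inj_on v {..<6} \<and> (\<forall>k<6. v k < s) \<and>
            (\<forall>k<6. level D d (a (v k)) = level D d (a (v 0))) \<and>
            (\<forall>k<3. var_pi_coeff D (a (v (2*k))) = var_pi_coeff D (a (v (2*k+1)))))
          \<longrightarrow> has_nontrivial_zero D d s a)
       \<and> ((\<exists>I. I \<subseteq> {..<s} \<and> card I = 7 \<and>
            (\<forall>i\<in>I. \<forall>j\<in>I. level D d (a i) = level D d (a j)))
          \<longrightarrow> has_nontrivial_zero D d s a)"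
proof -
  from assms(1) consider "D = disc TYPE(disc_2)" | "D = disc TYPE(disc_minus_2)" | "D = disc TYPE(disc_10)"
    | "D = disc TYPE(disc_minus_10)" | "D = disc TYPE(disc_minus_1)" | "D = disc TYPE(disc_minus_5)"
    by (auto simp: disc_disc_2_def disc_disc_minus_2_def disc_disc_10_def disc_disc_minus_10_def
        disc_disc_minus_1_def disc_disc_minus_5_def)
  then show ?thesis
    by cases (rule diagonal_form_zero[OF _ assms(2,3,5)], assumption)+
qed

end
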